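(* In the source coding problem with receiver side information described in the context, suppose $X=Y$ (i.e. $X_i=Y_i$ for all $i$). Then the set $\mathcal{R}$ of achievable rate triples equals the closure of $\bigcup_{p\in\mathcal{P}^*}\mathcal{R}^{(p)*}$.
   Context: Let $\mathcal{X},\mathcal{Y},\mathcal{U},\mathcal{V}$ be finite sets and let $\{(X_i,Y_i,U_i,V_i)\}_{i\ge1}$ be i.i.d. with joint distribution $\mathcal{Q}_{XYUV}$. For $i=0,1,2$ let $\mathcal{M}_i=\{1,\dots,|\mathcal{M}_i|\}$ be finite index sets. A code of block length $n$ consists of an encoder $e^{(n)}:\mathcal{X}^n\times\mathcal{Y}^n\to\mathcal{M}_0\times\mathcal{M}_1\times\mathcal{M}_2$, $(M_0,M_1,M_2)=e^{(n)}(X^n,Y^n)$, a decoder $d_x^{(n)}:\mathcal{M}_0\times\mathcal{M}_1\times\mathcal{U}^n\to\mathcal{X}^n$, $\widehat X^n=d_x^{(n)}(M_0,M_1,U^n)$, and a decoder $d_y^{(n)}:\mathcal{M}_0\times\mathcal{M}_2\times\mathcal{V}^n\to\mathcal{Y}^n$, $\widehat Y^n=d_y^{(n)}(M_0,M_2,V^n)$. Let $P_e=\max\{\Pr[\widehat X^n\ne X^n],\Pr[\widehat Y^n\ne Y^n]\}$. A triple $(R_0,R_1,R_2)$ is achievable if for every $\epsilon>0$ and all sufficiently large $n$ there is such a code with $P_e\le\epsilon$ and $(1/n)\log_2|\mathcal{M}_i|\le R_i+\epsilon$, $i=0,1,2$; $\mathcal{R}$ is the set of achievable triples. Let $\mathcal{A},\mathcal{B}$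 be finite sets with $|\mathcal{A}|\le|\mathcal{X}|+1$, $|\mathcal{B}|\le|\mathcal{X}|+1$. Let $\mathcal{P}^*$ be the family of probability functions $p$ on $\mathcal{A}\times\mathcal{B}\times\mathcal{X}\times\mathcal{U}\times\mathcal{V}$ with $p(a,b,x,u,v)=p(a,b|x)p(x,u,v)$ and $\sum_{(a,b)}p(a,b,x,u,v)=\mathcal{Q}_{XUV}(x,u,v)$ (the $(X,U,V)$-marginal of the source). For $p\in\mathcal{P}^*$ let $\mathcal{R}^{(p)*}$ be the set of $(R_0,R_1,R_2)$ with $R_0\ge\max\{H_p(X|A,U),H_p(X|B,V)\}$, $R_1\ge I_p(X;A|U)$, $R_2\ge I_p(X;B|V)$. *)

theory Defs
  imports "HOL-Analysis.Analysis"
begin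

definition block_prob :: "('a::finite \<Rightarrow> real) \<Rightarrow> nat \<Rightarrow> ('a list \<Rightarrow> bool) \<Rightarrow> real" where
  "block_prob Q n E = (\<Sum>zs\<in>{zs. length zs = n}. if E zs then prod_list (map Q zs) else 0)"

definition Xs :: "('x \<times> 'y \<times> 'u \<times> 'v) list \<Rightarrow> 'x list" where
  "Xs zs = map (\<lambda>(x,y,u,v). x) zs"
definition Ys :: "('x \<times> 'y \<times> 'u \<times> 'v) list \<Rightarrow> 'y list" where
  "Ys zs = map (\<lambda>(x,y,u,v). y) zs"
definition Us :: "('x \<times> 'y \<times> 'u \<times> 'v) list \<Rightarrow> 'u list" where
  "Us zs = map (\<lambda>(x,y,u,v). u) zs"
definition Vs :: "('x \<times> 'y \<times> 'u \<times> 'v) list \<Rightarrow> 'v list" where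
  "Vs zs = map (\<lambda>(x,y,u,v). v) zs"

definition is_code ::
  "nat \<Rightarrow> nat \<Rightarrow> nat \<Rightarrow> nat \<Rightarrow> ('x list \<times> 'y list \<Rightarrow> nat \<times> nat \<times> nat) \<Rightarrow> bool" where
  "is_code n M0 M1 M2 e \<longleftrightarrow>
     (\<forall>xs ys. length xs = n \<longrightarrow> length ys = n \<longrightarrow> e (xs, ys) \<in> {1..M0} \<times> {1..M1} \<times> {1..M2})"

definition err_x ::
  "('x::finite \<times> 'y::finite \<times> 'u::finite \<times> 'v::finite \<Rightarrow> real) \<Rightarrow> nat \<Rightarrow> ('x list \<times> 'y list \<Rightarrow> nat \<times> nat \<times> nat)
   \<Rightarrow> (nat \<Rightarrow> nat \<Rightarrow> 'u list \<Rightarrow> 'x list) \<Rightarrow> real" where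
  "err_x Q n e dx = block_prob Q n
     (\<lambda>zs. case e (Xs zs, Ys zs) of (m0, m1, m2) \<Rightarrow> dx m0 m1 (Us zs) \<noteq> Xs zs)"

definition err_y ::
  "('x::finite \<times> 'y::finite \<times> 'u::finite \<times> 'v::finite \<Rightarrow> real) \<Rightarrow> nat \<Rightarrow> ('x list \<times> 'y list \<Rightarrow> nat \<times> nat \<times> nat)
   \<Rightarrow> (nat \<Rightarrow> nat \<Rightarrow> 'v list \<Rightarrow> 'y list) \<Rightarrow> real" where
  "err_y Q n e dy = block_prob Q n
     (\<lambda>zs. case e (Xs zs, Ys zs) of (m0, m1, m2) \<Rightarrow> dy m0 m2 (Vs zs) \<noteq> Ys zs)"

definition achievable ::
  "('x::finite \<times> 'y::finite \<times> 'u::finite \<times> 'v::finite \<Rightarrow> real) \<Rightarrow> real \<times> real \<times> real \<Rightarrow> bool" where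
  "achievable Q R \<longleftrightarrow> (case R of (R0, R1, R2) \<Rightarrow>
     (\<forall>\<epsilon>>0. \<exists>N. \<forall>n\<ge>N. \<exists>M0 M1 M2 e
         (dx :: nat \<Rightarrow> nat \<Rightarrow> 'u list \<Rightarrow> 'x list) (dy :: nat \<Rightarrow> nat \<Rightarrow> 'v list \<Rightarrow> 'y list).
        M0 \<ge> 1 \<and> M1 \<ge> 1 \<and> M2 \<ge> 1 \<and> is_code n M0 M1 M2 e \<and>
        max (err_x Q n e dx) (err_y Q n e dy) \<le> \<epsilon> \<and>
        log 2 (real M0) / real n \<le> R0 + \<epsilon> \<and>
        log 2 (real M1) / real n \<le> R1 + \<epsilon> \<and>
        log 2 (real M2) / real n \<le> R2 + \<epsilon>))"

definition rate_region ::
  "('x::finite \<times> 'y::finite \<times> 'u::finite \<times> 'v::finite \<Rightarrow> real) \<Rightarrow> (real \<times> real \<times> real) set" where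
  "rate_region Q = {R. achievable Q R}"

definition marg :: "'w set \<Rightarrow> ('w \<Rightarrow> real) \<Rightarrow> ('w \<Rightarrow> 'z) \<Rightarrow> 'z \<Rightarrow> real" where
  "marg D p f z = (\<Sum>w\<in>D. if f w = z then p w else 0)"

definition cond_entropy :: "'w set \<Rightarrow> ('w \<Rightarrow> real) \<Rightarrow> ('w \<Rightarrow> 'a) \<Rightarrow> ('w \<Rightarrow> 'c) \<Rightarrow> real" where
  "cond_entropy D p f g =
     - (\<Sum>(a, c)\<in>(\<lambda>w. (f w, g w)) ` D.
          let pac = marg D p (\<lambda>w. (f w, g w)) (a, c); pc = marg D p g c
          in if pac = 0 then 0 else pac * log 2 (pac / pc))"

definition cond_mutual_info ::
  "'w set \<Rightarrow> ('w \<Rightarrow> real) \<Rightarrow> ('w \<Rightarrow> 'a) \<Rightarrow> ('w \<Rightarrow> 'b) \<Rightarrow> ('w \<Rightarrow> 'c) \<Rightarrow> real" where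
  "cond_mutual_info D p f g h =
     (\<Sum>(a, b, c)\<in>(\<lambda>w. (f w, g w, h w)) ` D.
          let pabc = marg D p (\<lambda>w. (f w, g w, h w)) (a, b, c);
              pac = marg D p (\<lambda>w. (f w, h w)) (a, c);
              pbc = marg D p (\<lambda>w. (g w, h w)) (b, c);
              pc = marg D p h c
          in if pabc = 0 then 0 else pabc * log 2 (pabc * pc / (pac * pbc)))"

text \<open>The auxiliary alphabets A, B (of size at most |X|+1) are realised,
  without loss of generality, inside {0..|X|} :: nat set; a pmf on a smaller
  alphabet is the same as a pmf on {0..|X|} vanishing outside it.\<close>

definition aux_dom :: "(nat \<times> nat \<times> 'x::finite \<times> 'u::finite \<times> 'v::finite) set" where
  "aux_dom = {..CARD('x)} \<times> {..CARD('x)} \<times> UNIV"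

definition Q_XUV :: "('x::finite \<times> 'y::finite \<times> 'u \<times> 'v \<Rightarrow> real) \<Rightarrow> 'x \<Rightarrow> 'u \<Rightarrow> 'v \<Rightarrow> real" where
  "Q_XUV Q x u v = (\<Sum>y\<in>UNIV. Q (x, y, u, v))"

definition Pstar ::
  "('x::finite \<times> 'y::finite \<times> 'u::finite \<times> 'v::finite \<Rightarrow> real)
   \<Rightarrow> (nat \<times> nat \<times> 'x \<times> 'u \<times> 'v \<Rightarrow> real) set" where
  "Pstar Q = {p. (\<forall>w. p w \<ge> 0) \<and>
      (\<forall>w. w \<notin> aux_dom \<longrightarrow> p w = 0) \<and>
      (\<forall>x u v. (\<Sum>(a, b)\<in>{..CARD('x)} \<times> {..CARD('x)}. p (a, b, x, u, v)) = Q_XUV Q x u v) \<and>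
      \<comment> \<open>p(a,b,x,u,v) = p(a,b|x) p(x,u,v), with the conditional cleared:
          p(a,b,x,u,v) p(x) = p(a,b,x) p(x,u,v)\<close>
      (\<forall>a b x u v.
         p (a, b, x, u, v) * marg aux_dom p (\<lambda>(a, b, x, u, v). x) x =
         marg aux_dom p (\<lambda>(a, b, x, u, v). (a, b, x)) (a, b, x) *
         marg aux_dom p (\<lambda>(a, b, x, u, v). (x, u, v)) (x, u, v))}"

definition Rstar :: "(nat \<times> nat \<times> 'x::finite \<times> 'u::finite \<times> 'v::finite \<Rightarrow> real) \<Rightarrow> (real \<times> real \<times> real) set" where
  "Rstar p = {(R0, R1, R2).
      R0 \<ge> max (cond_entropy aux_dom p (\<lambda>(a, b, x, u, v). x) (\<lambda>(a, b, x, u, v). (a, u)))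
               (cond_entropy aux_dom p (\<lambda>(a, b, x, u, v). x) (\<lambda>(a, b, x, u, v). (b, v))) \<and>
      R1 \<ge> cond_mutual_info aux_dom p (\<lambda>(a, b, x, u, v). x) (\<lambda>(a, b, x, u, v). a) (\<lambda>(a, b, x, u, v). u) \<and>
      R2 \<ge> cond_mutual_info aux_dom p (\<lambda>(a, b, x, u, v). x) (\<lambda>(a, b, x, u, v). b) (\<lambda>(a, b, x, u, v). v)}"

end

theory Submission
  imports Defs "HOL-Real_Asymp.Real_Asymp"
begin

text \<open>Because \<open>X = Y\<close>, both decoders must recover the same block \<open>X\<^sup>n\<close>, from side information
  \<open>U\<^sup>n\<close> and \<open>V\<^sup>n\<close> respectively, so the region is the polytope \<open>R\<^sub>0 + R\<^sub>1 \<ge> H(X|U)\<close>,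
  \<open>R\<^sub>0 + R\<^sub>2 \<ge> H(X|V)\<close>, \<open>R\<^sub>i \<ge> 0\<close>.
  Converse: a decoder choosing among \<open>M\<^sub>0 M\<^sub>1\<close> candidates determined by \<open>U\<^sup>n\<close> succeeds with
  probability at most \<open>M\<^sub>0 M\<^sub>1 2\<^bsup>-n(H(X|U) - \<delta>)\<^esup>\<close> plus the probability that the conditional
  self-information of \<open>X\<^sup>n\<close> deviates from \<open>n H(X|U)\<close> by \<open>n\<delta>\<close>, which Chebyshev's inequality makes small.
  Achievability: bin the source blocks at random into \<open>M\<^sub>0 M\<^sub>1 M\<^sub>2\<close> bins; each decoder sees a
  coarser bin and looks for a block in it whose conditional probability is at least
  \<open>2\<^bsup>-n(H + \<delta>)\<^esup>\<close>.  Averaged over all binnings the error probability is small, so some binning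
  is good.
  Single-letter form: for \<open>p \<in> P*\<close> the chain rule \<open>H(X|A,U) + I(X;A|U) = H(X|U)\<close> puts
  \<open>R^(p)*\<close> inside the polytope, and auxiliaries that reveal \<open>X\<close> with probability \<open>\<lambda>\<close> and are
  erased otherwise attain all of it.\<close>

definition blocks :: "nat \<Rightarrow> 'a list set" where
  "blocks n = {xs. length xs = n}"

lemma finite_blocks [simp]: "finite (blocks n :: 'a::finite list set)"
  unfolding blocks_def using finite_lists_length_eq[of "UNIV :: 'a set" n] by simp

lemma blocks_0: "blocks 0 = {[]}"
  by (simp add: blocks_def)

lemma sum_blocks_Suc:
  "sum F (blocks (Suc n) :: 'a::finite list set) = (\<Sum>x\<in>UNIV. \<Sum>xs\<in>blocks n. F (x # xs))"
proof -
  have Suc_eq: "blocks (Suc n) = (\<lambda>(x, xs). x # xs) ` (UNIV \<times> blocks n)"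
    by (auto simp: blocks_def length_Suc_conv image_iff)
  have "sum F (blocks (Suc n)) = sum (F \<circ> (\<lambda>(x, xs). x # xs)) (UNIV \<times> blocks n)"
    unfolding Suc_eq by (rule sum.reindex) (auto simp: inj_on_def)
  then show ?thesis
    by (simp add: sum.cartesian_product split_def)
qed

lemma sum_blocks_prod_list:
  "(\<Sum>xs\<in>blocks n. prod_list (map (f :: 'a::finite \<Rightarrow> real) xs)) = (\<Sum>x\<in>UNIV. f x) ^ n"
proof (induction n)
  case (Suc n)
  have "(\<Sum>xs\<in>blocks (Suc n). prod_list (map f xs)) = (\<Sum>x\<in>UNIV. f x * (\<Sum>xs\<in>blocks n. prod_list (map f xs)))"
    by (simp add: sum_blocks_Suc sum_distrib_left)
  then show ?case by (simp add: Suc sum_distrib_right[symmetric])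
qed (simp add: blocks_0)

lemma sum_blocks_pmf:
  "sum P UNIV = 1 \<Longrightarrow> (\<Sum>xs\<in>blocks n. prod_list (map (P :: 'a::finite \<Rightarrow> real) xs)) = 1"
  by (simp add: sum_blocks_prod_list)

lemma sum_mult_comp_eq_sum_fibres:
  fixes \<pi> :: "'a::finite \<Rightarrow> 'b::finite" and Q :: "'a \<Rightarrow> real"
  shows "(\<Sum>z\<in>UNIV. Q z * G (\<pi> z)) = (\<Sum>w\<in>UNIV. (\<Sum>z\<in>{z. \<pi> z = w}. Q z) * G w)"
proof -
  have "(\<Sum>w\<in>UNIV. (\<Sum>z\<in>{z. \<pi> z = w}. Q z) * G w)
      = (\<Sum>w\<in>UNIV. \<Sum>z\<in>UNIV. if \<pi> z = w then Q z * G w else 0)"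
    by (simp add: sum_distrib_right sum.inter_filter[symmetric])
  also have "\<dots> = (\<Sum>z\<in>UNIV. Q z * G (\<pi> z))"
    by (subst sum.swap) simp
  finally show ?thesis by simp
qed

text \<open>The image of an i.i.d. block under a letterwise map is i.i.d. with the image pmf.\<close>

lemma sum_blocks_map:
  fixes \<pi> :: "'a::finite \<Rightarrow> 'b::finite" and Q :: "'a \<Rightarrow> real"
  shows "(\<Sum>zs\<in>blocks n. prod_list (map Q zs) * F (map \<pi> zs)) =
         (\<Sum>ws\<in>blocks n. prod_list (map (\<lambda>w. \<Sum>z\<in>{z. \<pi> z = w}. Q z) ws) * F ws)"
proof (induction n arbitrary: F)
  case (Suc n)
  define P where "P = (\<lambda>w. \<Sum>z\<in>{z. \<pi> z = w}. Q z)"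
  have "(\<Sum>zs\<in>blocks (Suc n). prod_list (map Q zs) * F (map \<pi> zs)) =
        (\<Sum>z\<in>UNIV. Q z * (\<Sum>zs\<in>blocks n. prod_list (map Q zs) * F (\<pi> z # map \<pi> zs)))"
    by (simp add: sum_blocks_Suc sum_distrib_left mult.assoc)
  also have "\<dots> = (\<Sum>z\<in>UNIV. Q z * (\<Sum>ws\<in>blocks n. prod_list (map P ws) * F (\<pi> z # ws)))"
    using Suc[of "\<lambda>ws. F (\<pi> z # ws)" for z] by (simp add: P_def)
  also have "\<dots> = (\<Sum>w\<in>UNIV. P w * (\<Sum>ws\<in>blocks n. prod_list (map P ws) * F (w # ws)))"
    unfolding P_def by (rule sum_mult_comp_eq_sum_fibres)
  also have "\<dots> = (\<Sum>ws\<in>blocks (Suc n). prod_list (map P ws) * F ws)"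
    by (simp add: sum_blocks_Suc sum_distrib_left mult.assoc)
  finally show ?case by (simp add: P_def)
qed (simp add: blocks_0)

lemma sum_blocks_zip:
  fixes F :: "('a \<times> 'b) list \<Rightarrow> 'r::comm_monoid_add"
  shows "(\<Sum>ws\<in>blocks n. F ws) = (\<Sum>ss\<in>blocks n. \<Sum>xs\<in>blocks n. F (zip xs ss))"
proof -
  have "bij_betw (\<lambda>(ss, xs). zip xs ss) (blocks n \<times> blocks n) (blocks n :: ('a \<times> 'b) list set)"
  proof (rule bij_betwI')
    fix ws :: "('a \<times> 'b) list" assume "ws \<in> blocks n"
    then show "\<exists>p\<in>blocks n \<times> blocks n. ws = (case p of (ss, xs) \<Rightarrow> zip xs ss)"
      by (intro bexI[of _ "(map snd ws, map fst ws)"]) (auto simp: blocks_def zip_map_fst_snd)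
  qed (auto simp: blocks_def zip_eq_conv)
  then show ?thesis
    by (simp add: sum.reindex_bij_betw[symmetric] sum.cartesian_product split_def)
qed

section \<open>Chebyshev's inequality for i.i.d.\ blocks\<close>

lemma prod_list_map_nonneg: "(\<And>w. (P w :: real) \<ge> 0) \<Longrightarrow> prod_list (map P ws) \<ge> 0"
  by (rule prod_list_nonneg) auto

context
  fixes P h :: "'a::finite \<Rightarrow> real"
  assumes pmf_total: "sum P UNIV = 1" and mean_zero: "(\<Sum>w\<in>UNIV. P w * h w) = 0"
begin

lemma block_mean_zero:
  "(\<Sum>ws\<in>blocks n. prod_list (map P ws) * sum_list (map h ws)) = 0"
proof (induction n)
  case (Suc n)
  have "(\<Sum>ws\<in>blocks (Suc n). prod_list (map P ws) * sum_list (map h ws)) =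
     (\<Sum>w\<in>UNIV. P w * (h w * (\<Sum>ws\<in>blocks n. prod_list (map P ws))
        + (\<Sum>ws\<in>blocks n. prod_list (map P ws) * sum_list (map h ws))))"
    by (simp add: sum_blocks_Suc algebra_simps sum.distrib sum_distrib_left)
  then show ?case
    using Suc sum_blocks_pmf[OF pmf_total] mean_zero by simp
qed (simp add: blocks_0)

lemma block_second_moment:
  "(\<Sum>ws\<in>blocks n. prod_list (map P ws) * (sum_list (map h ws))\<^sup>2)
     = real n * (\<Sum>w\<in>UNIV. P w * (h w)\<^sup>2)"
proof (induction n)
  case (Suc n)
  define V where "V = (\<Sum>w\<in>UNIV. P w * (h w)\<^sup>2)"
  have "(\<Sum>ws\<in>blocks (Suc n). prod_list (map P ws) * (sum_list (map h ws))\<^sup>2) =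
     (\<Sum>w\<in>UNIV. P w * ((h w)\<^sup>2 * (\<Sum>ws\<in>blocks n. prod_list (map P ws))
        + 2 * h w * (\<Sum>ws\<in>blocks n. prod_list (map P ws) * sum_list (map h ws))
        + (\<Sum>ws\<in>blocks n. prod_list (map P ws) * (sum_list (map h ws))\<^sup>2)))"
    by (simp add: sum_blocks_Suc algebra_simps power2_eq_square sum.distrib sum_distrib_left)
  also have "\<dots> = (\<Sum>w\<in>UNIV. P w * (h w)\<^sup>2 + P w * (real n * V))"
    using Suc sum_blocks_pmf[OF pmf_total] block_mean_zero by (simp add: algebra_simps V_def)
  also have "\<dots> = V + (\<Sum>w\<in>UNIV. P w) * (real n * V)"
    by (simp add: sum.distrib V_def sum_distrib_right)
  finally show ?case
    using pmf_total by (simp add: V_def algebra_simps)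
qed (simp add: blocks_0)

lemma block_chebyshev:
  assumes nonneg: "\<And>w. P w \<ge> 0" and "c > 0"
  shows "(\<Sum>ws\<in>blocks n. prod_list (map P ws) * (if c \<le> \<bar>sum_list (map h ws)\<bar> then 1 else 0))
           \<le> real n * (\<Sum>w\<in>UNIV. P w * (h w)\<^sup>2) / c\<^sup>2"
proof -
  have "(if c \<le> \<bar>s\<bar> then 1 else 0) \<le> s\<^sup>2 / c\<^sup>2" for s :: real
  proof (cases "c \<le> \<bar>s\<bar>")
    case True
    then have "c\<^sup>2 \<le> \<bar>s\<bar>\<^sup>2" using \<open>c > 0\<close> by (intro power_mono) auto
    then show ?thesis using True \<open>c > 0\<close> by simp
  qed simp
  then have "(\<Sum>ws\<in>blocks n. prod_list (map P ws) * (if c \<le> \<bar>sum_list (map h ws)\<bar> then 1 else 0))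
      \<le> (\<Sum>ws\<in>blocks n. prod_list (map P ws) * ((sum_list (map h ws))\<^sup>2 / c\<^sup>2))"
    by (intro sum_mono mult_left_mono prod_list_map_nonneg nonneg)
  also have "\<dots> = real n * (\<Sum>w\<in>UNIV. P w * (h w)\<^sup>2) / c\<^sup>2"
    by (simp add: sum_divide_distrib[symmetric] block_second_moment)
  finally show ?thesis .
qed

end

text \<open>For a pmf \<open>P\<close> on pairs \<open>(x, s)\<close>, \<open>cond_ent P\<close> is \<open>H(X|S)\<close> and \<open>self_info P (x, s) = - log\<^sub>2 P(x|s)\<close>;
  the conditional pmf is \<open>0\<close> (by division by zero) where \<open>P(s) = 0\<close>.\<close>

definition snd_marg :: "('x::finite \<times> 's \<Rightarrow> real) \<Rightarrow> 's \<Rightarrow> real" where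
  "snd_marg P s = (\<Sum>x\<in>UNIV. P (x, s))"

definition cond_pmf :: "('x::finite \<times> 's \<Rightarrow> real) \<Rightarrow> 'x \<times> 's \<Rightarrow> real" where
  "cond_pmf P w = P w / snd_marg P (snd w)"

definition self_info :: "('x::finite \<times> 's \<Rightarrow> real) \<Rightarrow> 'x \<times> 's \<Rightarrow> real" where
  "self_info P w = - log 2 (cond_pmf P w)"

definition cond_ent :: "('x::finite \<times> 's::finite \<Rightarrow> real) \<Rightarrow> real" where
  "cond_ent P = (\<Sum>w\<in>UNIV. P w * self_info P w)"

lemma sum_snd_marg: "sum (snd_marg P) UNIV = sum P UNIV"
  unfolding snd_marg_def by (subst sum.swap) (simp add: sum.cartesian_product)

locale pair_pmf =
  fixes P :: "'x::finite \<times> 's::finite \<Rightarrow> real"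
  assumes nonneg: "\<And>w. P w \<ge> 0" and total: "sum P UNIV = 1"
begin

definition info_var :: real where
  "info_var = (\<Sum>w\<in>UNIV. P w * (self_info P w - cond_ent P)\<^sup>2)"

lemma le_snd_marg: "P (x, s) \<le> snd_marg P s"
  unfolding snd_marg_def using member_le_sum[of x UNIV "\<lambda>x. P (x, s)"] nonneg by auto

lemma snd_marg_nonneg: "snd_marg P s \<ge> 0"
  unfolding snd_marg_def using nonneg by (simp add: sum_nonneg)

lemma snd_marg_total: "sum (snd_marg P) UNIV = 1"
  using sum_snd_marg[of P] total by simp

lemma snd_marg_mult_cond_pmf: "snd_marg P (snd w) * cond_pmf P w = P w"
proof (cases w)
  case (Pair x s)
  then show ?thesis
    using le_snd_marg[of x s] nonneg[of w] by (cases "snd_marg P s = 0") (auto simp: cond_pmf_def)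
qed

lemma cond_pmf_nonneg: "cond_pmf P w \<ge> 0"
  unfolding cond_pmf_def using nonneg snd_marg_nonneg by simp

lemma cond_pmf_pos: "P w > 0 \<Longrightarrow> cond_pmf P w > 0"
  using le_snd_marg[of "fst w" "snd w"] unfolding cond_pmf_def by simp

lemma cond_pmf_le_1: "cond_pmf P w \<le> 1"
  using le_snd_marg[of "fst w" "snd w"] snd_marg_nonneg[of "snd w"] unfolding cond_pmf_def
  by (cases "snd_marg P (snd w) = 0") (auto simp: divide_le_eq_1)

lemma cond_ent_nonneg: "cond_ent P \<ge> 0"
  unfolding cond_ent_def self_info_def
proof (rule sum_nonneg)
  fix w
  show "0 \<le> P w * - log 2 (cond_pmf P w)"
  proof (cases "P w = 0")
    case False
    then have "log 2 (cond_pmf P w) \<le> 0"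
      using cond_pmf_pos[of w] cond_pmf_le_1[of w] nonneg[of w] by simp
    then show ?thesis using nonneg[of w] by (simp add: mult_nonneg_nonpos)
  qed simp
qed

lemma sum_blocks_cond_pmf_le_1:
  "length ss = n \<Longrightarrow> (\<Sum>xs\<in>blocks n. prod_list (map (cond_pmf P) (zip xs ss))) \<le> 1"
proof (induction ss arbitrary: n)
  case (Cons s ss)
  then obtain m where n: "n = Suc m" "length ss = m" by auto
  have "(\<Sum>x\<in>UNIV. cond_pmf P (x, s)) \<le> 1"
    unfolding cond_pmf_def using snd_marg_nonneg[of s]
    by (cases "snd_marg P s = 0") (auto simp: snd_marg_def[symmetric] sum_divide_distrib[symmetric])
  moreover have "(\<Sum>x\<in>UNIV. cond_pmf P (x, s) * (\<Sum>xs\<in>blocks m. prod_list (map (cond_pmf P) (zip xs ss))))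
      \<le> (\<Sum>x\<in>UNIV. cond_pmf P (x, s))"
    using Cons.IH[OF n(2)] by (intro sum_mono mult_right_le_one_le cond_pmf_nonneg sum_nonneg
        prod_list_map_nonneg) auto
  ultimately show ?case
    by (simp add: n sum_blocks_Suc sum_distrib_left)
qed (simp add: blocks_0)

lemma card_likely_blocks_le:
  assumes "t > 0" "length ss = n"
  shows "real (card {xs\<in>blocks n. t \<le> prod_list (map (cond_pmf P) (zip xs ss))}) \<le> 1 / t"
proof -
  let ?C = "{xs\<in>blocks n. t \<le> prod_list (map (cond_pmf P) (zip xs ss))}"
  have "t * real (card ?C) = (\<Sum>xs\<in>?C. t)" by simp
  also have "\<dots> \<le> (\<Sum>xs\<in>?C. prod_list (map (cond_pmf P) (zip xs ss)))"
    by (rule sum_mono) auto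
  also have "\<dots> \<le> (\<Sum>xs\<in>blocks n. prod_list (map (cond_pmf P) (zip xs ss)))"
    by (rule sum_mono2) (auto intro!: prod_list_nonneg simp: cond_pmf_nonneg)
  also have "\<dots> \<le> 1" by (rule sum_blocks_cond_pmf_le_1[OF assms(2)])
  finally show ?thesis using assms(1) by (simp add: field_simps)
qed

lemma prod_cond_pmf_eq_powr:
  "(\<forall>w\<in>set ws. P w > 0) \<Longrightarrow>
     prod_list (map (cond_pmf P) ws) = 2 powr (- sum_list (map (self_info P) ws))"
proof (induction ws)
  case (Cons w ws)
  then have "cond_pmf P w = 2 powr (- self_info P w)"
    using cond_pmf_pos[of w] by (simp add: self_info_def)
  then show ?case using Cons by (simp add: powr_add[symmetric])
qed simp

text \<open>The weak law of large numbers for the self-information, i.e.\ the conditional AEP.\<close>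

lemma prob_self_info_deviation_le:
  assumes "\<delta> > 0" "n > 0"
    and dev: "\<And>ws. ws \<in> blocks n \<Longrightarrow> \<forall>w\<in>set ws. P w > 0 \<Longrightarrow> E ws \<Longrightarrow>
                real n * \<delta> \<le> \<bar>sum_list (map (self_info P) ws) - real n * cond_ent P\<bar>"
  shows "(\<Sum>ws\<in>blocks n. prod_list (map P ws) * (if E ws then 1 else 0)) \<le> info_var / (real n * \<delta>\<^sup>2)"
proof -
  define h where "h = (\<lambda>w. self_info P w - cond_ent P)"
  have "(\<Sum>ws\<in>blocks n. prod_list (map P ws) * (if E ws then 1 else 0)) \<le>
        (\<Sum>ws\<in>blocks n. prod_list (map P ws) * (if real n * \<delta> \<le> \<bar>sum_list (map h ws)\<bar> then 1 else 0))"
  proof (rule sum_mono)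
    fix ws :: "('x \<times> 's) list" assume ws: "ws \<in> blocks n"
    show "prod_list (map P ws) * (if E ws then 1 else 0)
       \<le> prod_list (map P ws) * (if real n * \<delta> \<le> \<bar>sum_list (map h ws)\<bar> then 1 else 0)"
    proof (cases "prod_list (map P ws) = 0")
      case False
      then have pos: "\<forall>w\<in>set ws. P w > 0"
        using nonneg by (metis less_eq_real_def list.set_map image_eqI prod_list_zero_iff)
      have "sum_list (map h ws) = sum_list (map (self_info P) ws) - real n * cond_ent P"
        using ws by (simp add: h_def sum_list_subtractf sum_list_triv blocks_def)
      then show ?thesis using dev[OF ws pos] prod_list_map_nonneg[of P ws, OF nonneg] by auto
    qed simp
  qed
  also have "\<dots> \<le> real n * info_var / (real n * \<delta>)\<^sup>2"
  proof -
    have "(\<Sum>w\<in>UNIV. P w * h w) = 0"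
      by (simp add: h_def algebra_simps sum_subtractf cond_ent_def total flip: sum_distrib_right)
    moreover have "info_var = (\<Sum>w\<in>UNIV. P w * (h w)\<^sup>2)"
      by (simp add: info_var_def h_def)
    ultimately show ?thesis
      using block_chebyshev[of P h, OF total _ nonneg, of "real n * \<delta>" n] assms by simp
  qed
  also have "\<dots> = info_var / (real n * \<delta>\<^sup>2)"
    using assms by (simp add: power2_eq_square field_simps)
  finally show ?thesis .
qed

lemma prob_cond_pmf_small:
  assumes "\<delta> > 0" "n > 0"
  shows "(\<Sum>ws\<in>blocks n. prod_list (map P ws) *
      (if prod_list (map (cond_pmf P) ws) < 2 powr (- (real n * (cond_ent P + \<delta>))) then 1 else 0))
    \<le> info_var / (real n * \<delta>\<^sup>2)"
  by (rule prob_self_info_deviation_le[OF assms]) (auto simp: prod_cond_pmf_eq_powr algebra_simps)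

lemma prob_cond_pmf_large:
  assumes "\<delta> > 0" "n > 0"
  shows "(\<Sum>ws\<in>blocks n. prod_list (map P ws) *
      (if 2 powr (- (real n * (cond_ent P - \<delta>))) < prod_list (map (cond_pmf P) ws) then 1 else 0))
    \<le> info_var / (real n * \<delta>\<^sup>2)"
  by (rule prob_self_info_deviation_le[OF assms]) (auto simp: prod_cond_pmf_eq_powr algebra_simps)

end

section \<open>Converse: lossless description of a block given side information\<close>

lemma prod_list_map_mult:
  "prod_list (map (\<lambda>w. f w * g w) ws) = prod_list (map f ws) * (prod_list (map g ws) :: real)"
  by (induction ws) auto

context pair_pmf
begin

lemma prob_unlikely_in_small_set_le:
  assumes "t \<ge> 0" "\<And>ss. finite (D ss)" "\<And>ss. real (card (D ss)) \<le> K"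
  shows "(\<Sum>ws\<in>blocks n. prod_list (map P ws) *
      (if map fst ws \<in> D (map snd ws) \<and> prod_list (map (cond_pmf P) ws) \<le> t then 1 else 0)) \<le> t * K"
proof -
  have "(\<Sum>ws\<in>blocks n. prod_list (map P ws) *
      (if map fst ws \<in> D (map snd ws) \<and> prod_list (map (cond_pmf P) ws) \<le> t then 1 else 0))
    \<le> (\<Sum>ws\<in>blocks n. prod_list (map (snd_marg P) (map snd ws)) * t * (if map fst ws \<in> D (map snd ws) then 1 else 0))"
  proof (rule sum_mono)
    fix ws :: "('x \<times> 's) list"
    have "prod_list (map P ws) = prod_list (map (snd_marg P) (map snd ws)) * prod_list (map (cond_pmf P) ws)"
      using prod_list_map_mult[of "\<lambda>w. snd_marg P (snd w)" "cond_pmf P" ws]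
      by (simp add: snd_marg_mult_cond_pmf comp_def)
    moreover have "prod_list (map (snd_marg P) (map snd ws)) \<ge> 0"
      by (rule prod_list_nonneg) (auto simp: snd_marg_nonneg)
    ultimately show "prod_list (map P ws) *
        (if map fst ws \<in> D (map snd ws) \<and> prod_list (map (cond_pmf P) ws) \<le> t then 1 else 0)
      \<le> prod_list (map (snd_marg P) (map snd ws)) * t * (if map fst ws \<in> D (map snd ws) then 1 else 0)"
      using assms(1) by (auto intro: mult_left_mono)
  qed
  also have "\<dots> = (\<Sum>ss\<in>blocks n. \<Sum>xs\<in>blocks n. prod_list (map (snd_marg P) ss) * t * (if xs \<in> D ss then 1 else 0))"
    unfolding sum_blocks_zip[of _ n] by (intro sum.cong refl) (auto simp: blocks_def)
  also have "\<dots> = (\<Sum>ss\<in>blocks n. prod_list (map (snd_marg P) ss) * t * real (card (blocks n \<inter> D ss)))"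
    by (intro sum.cong refl) (simp add: sum_distrib_left[symmetric] sum.If_cases Int_def conj_commute)
  also have "\<dots> \<le> (\<Sum>ss\<in>blocks n. prod_list (map (snd_marg P) ss) * t * K)"
  proof (rule sum_mono)
    fix ss :: "'s list"
    have "real (card (blocks n \<inter> D ss)) \<le> K"
      using card_mono[OF assms(2)[of ss], of "blocks n \<inter> D ss"] assms(3)[of ss] by force
    moreover have "prod_list (map (snd_marg P) ss) * t \<ge> 0"
      using assms(1) by (intro mult_nonneg_nonneg prod_list_nonneg) (auto simp: snd_marg_nonneg)
    ultimately show "prod_list (map (snd_marg P) ss) * t * real (card (blocks n \<inter> D ss))
        \<le> prod_list (map (snd_marg P) ss) * t * K"
      by (intro mult_left_mono)
  qed
  also have "\<dots> = t * K"
    using sum_blocks_pmf[OF snd_marg_total, of n] by (simp flip: sum_distrib_right)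
  finally show ?thesis .
qed

lemma prob_in_small_set_le:
  assumes "\<delta> > 0" "n > 0" "\<And>ss. finite (D ss)" "\<And>ss. real (card (D ss)) \<le> K"
  shows "(\<Sum>ws\<in>blocks n. prod_list (map P ws) * (if map fst ws \<in> D (map snd ws) then 1 else 0))
     \<le> info_var / (real n * \<delta>\<^sup>2) + 2 powr (- (real n * (cond_ent P - \<delta>))) * K"
proof -
  define t where "t = 2 powr (- (real n * (cond_ent P - \<delta>)))"
  have "(\<Sum>ws\<in>blocks n. prod_list (map P ws) * (if map fst ws \<in> D (map snd ws) then 1 else 0))
     \<le> (\<Sum>ws\<in>blocks n. prod_list (map P ws) *
            (if map fst ws \<in> D (map snd ws) \<and> prod_list (map (cond_pmf P) ws) \<le> t then 1 else 0))
        + (\<Sum>ws\<in>blocks n. prod_list (map P ws) * (if t < prod_list (map (cond_pmf P) ws) then 1 else 0))"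
    unfolding sum.distrib[symmetric] by (intro sum_mono) (use prod_list_map_nonneg[OF nonneg] in auto)
  also have "\<dots> \<le> t * K + info_var / (real n * \<delta>\<^sup>2)"
    using prob_unlikely_in_small_set_le[of t D K n] prob_cond_pmf_large[OF assms(1,2)] assms(3,4)
    unfolding t_def by (intro add_mono) auto
  finally show ?thesis unfolding t_def by simp
qed

lemma cond_ent_le_rate:
  assumes codes: "\<And>\<epsilon>. \<epsilon> > 0 \<Longrightarrow> \<forall>\<^sub>F n in sequentially. \<exists>K D.
      (\<forall>ss. finite (D ss) \<and> real (card (D ss)) \<le> K) \<and> K \<le> 2 powr (real n * (R + \<epsilon>)) \<and>
      1 - \<epsilon> \<le> (\<Sum>ws\<in>blocks n. prod_list (map P ws) * (if map fst ws \<in> D (map snd ws) then 1 else 0))"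
  shows "cond_ent P \<le> R"
proof (rule ccontr)
  assume "\<not> cond_ent P \<le> R"
  define \<gamma> where "\<gamma> = cond_ent P - R"
  define \<epsilon> where "\<epsilon> = min (\<gamma>/4) (1/4)"
  have \<gamma>: "\<gamma> > 0"
    using \<open>\<not> cond_ent P \<le> R\<close> by (simp add: \<gamma>_def)
  then have \<epsilon>: "\<epsilon> > 0" "\<epsilon> \<le> \<gamma>/4" "\<epsilon> \<le> 1/4"
    by (auto simp: \<epsilon>_def)
  define C where "C = info_var / (\<gamma>/4)\<^sup>2"
  have "((\<lambda>n. C / real n + 2 powr (- (\<gamma>/2 * real n))) \<longlongrightarrow> 0) sequentially"
    using \<gamma> by real_asymp
  then have "((\<lambda>n. info_var / (real n * (\<gamma>/4)\<^sup>2) + 2 powr (- (\<gamma>/2 * real n))) \<longlongrightarrow> 0) sequentially"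
    by (simp add: C_def mult.commute)
  note ev = order_tendstoD(2)[OF this, of "1/2"] codes[OF \<epsilon>(1)] eventually_gt_at_top[of "0::nat"]
  obtain n K D where n: "n > 0"
    and small: "info_var / (real n * (\<gamma>/4)\<^sup>2) + 2 powr (- (\<gamma>/2 * real n)) < 1/2"
    and D: "\<And>ss. finite (D ss)" "\<And>ss. real (card (D ss)) \<le> K"
    and K: "K \<le> 2 powr (real n * (R + \<epsilon>))"
    and success: "1 - \<epsilon> \<le> (\<Sum>ws\<in>blocks n. prod_list (map P ws) * (if map fst ws \<in> D (map snd ws) then 1 else 0))"
    using eventually_happens'[OF sequentially_bot eventually_conj[OF ev(1) eventually_conj[OF ev(2,3)]]]
    by auto
  have "2 powr (- (real n * (cond_ent P - \<gamma>/4))) * K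
      \<le> 2 powr (- (real n * (cond_ent P - \<gamma>/4))) * 2 powr (real n * (R + \<epsilon>))"
    using K by (intro mult_left_mono) auto
  also have "\<dots> \<le> 2 powr (- (\<gamma>/2 * real n))"
  proof -
    have "R + \<epsilon> - cond_ent P + \<gamma>/4 \<le> - \<gamma>/2"
      using \<epsilon>(2) \<gamma>_def by linarith
    then have "real n * (R + \<epsilon> - cond_ent P + \<gamma>/4) \<le> real n * (- \<gamma>/2)"
      by (intro mult_left_mono) auto
    then show ?thesis by (simp add: powr_add[symmetric] algebra_simps)
  qed
  finally have "(\<Sum>ws\<in>blocks n. prod_list (map P ws) * (if map fst ws \<in> D (map snd ws) then 1 else 0))
      \<le> info_var / (real n * (\<gamma>/4)\<^sup>2) + 2 powr (- (\<gamma>/2 * real n))"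
    using prob_in_small_set_le[of "\<gamma>/4" n D K, OF _ n D] \<gamma> by linarith
  then have "1 - \<epsilon> < 1/2"
    using success small by linarith
  then show False using \<epsilon> by simp
qed

end

section \<open>Random binning\<close>

lemma sum_PiE_collision:
  fixes \<beta> :: "'m \<Rightarrow> 'k"
  assumes S: "finite S" "a \<in> S" "b \<in> S" "a \<noteq> b" and B: "finite B"
    and fibre: "\<And>y0. y0 \<in> B \<Longrightarrow> real (card {y\<in>B. \<beta> y = \<beta> y0}) * K = real (card B)"
  shows "(\<Sum>f\<in>PiE S (\<lambda>_. B). if \<beta> (f a) = \<beta> (f b) then 1 else 0) * K = real (card (PiE S (\<lambda>_. B)))"
proof -
  define S' where "S' = S - {a}"
  have S': "S = insert a S'" "a \<notin> S'" "b \<in> S'" "finite S'" using S by (auto simp: S'_def)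
  have "(\<Sum>f\<in>PiE S (\<lambda>_. B). if \<beta> (f a) = \<beta> (f b) then 1 else (0::real)) =
      (\<Sum>(y, g)\<in>B \<times> PiE S' (\<lambda>_. B). if \<beta> y = \<beta> (g b) then 1 else 0)"
    unfolding S'(1) PiE_insert_eq
    by (subst sum.reindex[OF inj_combinator[OF S'(2)]]) (use S' in \<open>auto intro!: sum.cong simp: split_def\<close>)
  also have "\<dots> = (\<Sum>y\<in>B. \<Sum>g\<in>PiE S' (\<lambda>_. B). if \<beta> y = \<beta> (g b) then 1 else 0)"
    by (simp add: sum.cartesian_product)
  also have "\<dots> = (\<Sum>g\<in>PiE S' (\<lambda>_. B). \<Sum>y\<in>B. if \<beta> y = \<beta> (g b) then 1 else 0)"
    by (rule sum.swap)
  also have "\<dots> = (\<Sum>g\<in>PiE S' (\<lambda>_. B). real (card {y\<in>B. \<beta> y = \<beta> (g b)}))"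
    using B by (simp add: sum.If_cases Int_def)
  finally have "(\<Sum>f\<in>PiE S (\<lambda>_. B). if \<beta> (f a) = \<beta> (f b) then 1 else 0) * K =
      (\<Sum>g\<in>PiE S' (\<lambda>_. B). real (card {y\<in>B. \<beta> y = \<beta> (g b)}) * K)"
    by (simp add: sum_distrib_right)
  also have "\<dots> = (\<Sum>g\<in>PiE S' (\<lambda>_. B). real (card B))"
    by (intro sum.cong refl fibre) (use S' in \<open>auto simp: PiE_def\<close>)
  also have "\<dots> = real (card (PiE S (\<lambda>_. B)))"
    using S' B by (simp add: card_PiE)
  finally show ?thesis .
qed

text \<open>A block \<open>xs\<close> is encoded by its bin \<open>\<beta> (f xs)\<close>; \<open>f\<close> ranges over all binnings of the
  blocks of length \<open>n\<close>.\<close>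

definition bin_decoder ::
  "('x::finite \<times> 's \<Rightarrow> real) \<Rightarrow> real \<Rightarrow> nat \<Rightarrow> ('x list \<Rightarrow> 'm) \<Rightarrow> ('m \<Rightarrow> 'k) \<Rightarrow> 'k \<Rightarrow> 's list \<Rightarrow> 'x list"
where
  "bin_decoder P t n f \<beta> k ss =
     (if \<exists>xs\<in>blocks n. \<beta> (f xs) = k \<and> t \<le> prod_list (map (cond_pmf P) (zip xs ss))
      then (SOME xs. xs \<in> blocks n \<and> \<beta> (f xs) = k \<and> t \<le> prod_list (map (cond_pmf P) (zip xs ss)))
      else [])"

lemma bin_decoder_error_le:
  assumes xs: "xs \<in> blocks n"
  shows "(if bin_decoder P t n f \<beta> (\<beta> (f xs)) ss \<noteq> xs then 1 else 0)
    \<le> (if prod_list (map (cond_pmf P) (zip xs ss)) < t then 1 else 0) +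
       (\<Sum>xs'\<in>{xs'\<in>blocks n. t \<le> prod_list (map (cond_pmf P) (zip xs' ss))} - {xs}.
          if \<beta> (f xs') = \<beta> (f xs) then 1 else (0::real))"
proof (cases "prod_list (map (cond_pmf P) (zip xs ss)) < t")
  case likely: False
  then have ex: "\<exists>xs'\<in>blocks n. \<beta> (f xs') = \<beta> (f xs) \<and> t \<le> prod_list (map (cond_pmf P) (zip xs' ss))"
    using xs by auto
  define xs' where "xs' = bin_decoder P t n f \<beta> (\<beta> (f xs)) ss"
  have xs': "xs' \<in> blocks n" "\<beta> (f xs') = \<beta> (f xs)" "t \<le> prod_list (map (cond_pmf P) (zip xs' ss))"
    using someI_ex[OF ex[unfolded Bex_def]] ex unfolding xs'_def bin_decoder_def by auto
  show ?thesis
  proof (cases "xs' = xs")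
    case False
    then have "xs' \<in> {xs'\<in>blocks n. t \<le> prod_list (map (cond_pmf P) (zip xs' ss))} - {xs}"
      using xs' by simp
    then have "1 \<le> (\<Sum>xs''\<in>{xs'\<in>blocks n. t \<le> prod_list (map (cond_pmf P) (zip xs' ss))} - {xs}.
        if \<beta> (f xs'') = \<beta> (f xs) then 1 else (0::real))"
      using member_le_sum[of xs' _ "\<lambda>x. if \<beta> (f x) = \<beta> (f xs) then 1 else (0::real)"] xs'(2) by auto
    then show ?thesis using False likely by (simp add: xs'_def)
  qed (simp add: sum_nonneg xs'_def)
qed (simp add: sum_nonneg)

context pair_pmf
begin

text \<open>A decoding error for the pair \<open>(xs, ss)\<close> means that \<open>xs\<close> is unlikely given \<open>ss\<close>, or that
  another likely block shares its bin; averaged over all binnings, each of the at most \<open>1/t\<close>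
  likely competitors collides with probability \<open>1/K\<close>.\<close>

lemma sum_bin_decoder_error_le:
  fixes \<beta> :: "'m \<Rightarrow> 'k"
  assumes t: "t > 0" and B: "finite B" and K: "K > 0"
    and fibre: "\<And>y0. y0 \<in> B \<Longrightarrow> real (card {y\<in>B. \<beta> y = \<beta> y0}) * K = real (card B)"
    and xs: "xs \<in> blocks n" and ss: "length ss = n"
  shows "(\<Sum>f\<in>PiE (blocks n) (\<lambda>_. B). if bin_decoder P t n f \<beta> (\<beta> (f xs)) ss \<noteq> xs then 1 else 0)
    \<le> real (card (PiE (blocks n :: 'x list set) (\<lambda>_. B))) *
        ((if prod_list (map (cond_pmf P) (zip xs ss)) < t then 1 else 0) + 1 / (t * K))"
proof -
  define FS where "FS = PiE (blocks n) (\<lambda>_::'x list. B)"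
  define N where "N = real (card FS)"
  define unlikely where "unlikely = (if prod_list (map (cond_pmf P) (zip xs ss)) < t then 1 else (0::real))"
  define C where "C = {xs'\<in>blocks n. t \<le> prod_list (map (cond_pmf P) (zip xs' ss))}"
  have "(\<Sum>f\<in>FS. if bin_decoder P t n f \<beta> (\<beta> (f xs)) ss \<noteq> xs then 1 else 0)
      \<le> (\<Sum>f\<in>FS. unlikely + (\<Sum>xs'\<in>C - {xs}. if \<beta> (f xs') = \<beta> (f xs) then 1 else 0))"
    unfolding unlikely_def C_def by (rule sum_mono) (rule bin_decoder_error_le[OF xs])
  also have "\<dots> = N * unlikely + (\<Sum>xs'\<in>C - {xs}. \<Sum>f\<in>FS. if \<beta> (f xs') = \<beta> (f xs) then 1 else 0)"
    by (simp add: sum.distrib N_def sum.swap[of _ FS])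
  also have "\<dots> = N * unlikely + real (card (C - {xs})) * (N / K)"
  proof -
    have "(\<Sum>f\<in>FS. if \<beta> (f xs') = \<beta> (f xs) then 1 else 0) = N / K" if "xs' \<in> C - {xs}" for xs'
      using sum_PiE_collision[of "blocks n" xs' xs B \<beta> K] that xs B fibre K
      unfolding FS_def N_def C_def by (simp add: field_simps)
    then show ?thesis by simp
  qed
  also have "\<dots> \<le> N * unlikely + (1 / t) * (N / K)"
  proof -
    have "real (card (C - {xs})) \<le> 1 / t"
      using card_likely_blocks_le[OF t ss] card_Diff1_le[of C xs] unfolding C_def
      by (meson of_nat_le_iff order.trans)
    then have "real (card (C - {xs})) * (N / K) \<le> (1 / t) * (N / K)"
      using K by (intro mult_right_mono) (auto simp: N_def)
    then show ?thesis by simp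
  qed
  also have "\<dots> = N * (unlikely + 1 / (t * K))"
    by (simp add: field_simps)
  finally show ?thesis by (simp only: FS_def N_def unlikely_def)
qed

lemma avg_bin_decoder_error_le:
  fixes \<beta> :: "'m \<Rightarrow> 'k"
  assumes \<delta>: "\<delta> > 0" "n > 0" and B: "finite B" and K: "K > 0"
    and fibre: "\<And>y0. y0 \<in> B \<Longrightarrow> real (card {y\<in>B. \<beta> y = \<beta> y0}) * K = real (card B)"
  defines "t \<equiv> 2 powr (- (real n * (cond_ent P + \<delta>)))"
  shows "(\<Sum>f\<in>PiE (blocks n) (\<lambda>_. B). \<Sum>ws\<in>blocks n. prod_list (map P ws) *
            (if bin_decoder P t n f \<beta> (\<beta> (f (map fst ws))) (map snd ws) \<noteq> map fst ws then 1 else 0))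
    \<le> real (card (PiE (blocks n :: 'x list set) (\<lambda>_. B))) *
        (info_var / (real n * \<delta>\<^sup>2) + 2 powr (real n * (cond_ent P + \<delta>)) / K)"
proof -
  define N where "N = real (card (PiE (blocks n :: 'x list set) (\<lambda>_. B)))"
  have t: "t > 0" by (simp add: t_def)
  have "(\<Sum>f\<in>PiE (blocks n) (\<lambda>_. B). \<Sum>ws\<in>blocks n. prod_list (map P ws) *
            (if bin_decoder P t n f \<beta> (\<beta> (f (map fst ws))) (map snd ws) \<noteq> map fst ws then 1 else 0))
      = (\<Sum>ws\<in>blocks n. prod_list (map P ws) * (\<Sum>f\<in>PiE (blocks n) (\<lambda>_. B).
            (if bin_decoder P t n f \<beta> (\<beta> (f (map fst ws))) (map snd ws) \<noteq> map fst ws then 1 else 0)))"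
    by (simp add: sum.swap[of _ "PiE (blocks n) (\<lambda>_. B)"] sum_distrib_left)
  also have "\<dots> \<le> (\<Sum>ws\<in>blocks n. prod_list (map P ws) *
      (N * ((if prod_list (map (cond_pmf P) ws) < t then 1 else 0) + 1 / (t * K))))"
  proof (intro sum_mono mult_left_mono prod_list_map_nonneg nonneg)
    fix ws :: "('x \<times> 's) list" assume "ws \<in> blocks n"
    then show "(\<Sum>f\<in>PiE (blocks n) (\<lambda>_. B).
          (if bin_decoder P t n f \<beta> (\<beta> (f (map fst ws))) (map snd ws) \<noteq> map fst ws then 1 else 0))
        \<le> N * ((if prod_list (map (cond_pmf P) ws) < t then 1 else 0) + 1 / (t * K))"
      using sum_bin_decoder_error_le[OF t B K fibre, of "map fst ws" n "map snd ws"]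
      by (simp add: blocks_def N_def zip_map_fst_snd)
  qed
  also have "\<dots> = N * ((\<Sum>ws\<in>blocks n. prod_list (map P ws) * (if prod_list (map (cond_pmf P) ws) < t then 1 else 0))
      + (\<Sum>ws\<in>blocks n. prod_list (map P ws)) / (t * K))"
    by (simp add: algebra_simps sum.distrib sum_distrib_left sum_divide_distrib)
  also have "\<dots> \<le> N * (info_var / (real n * \<delta>\<^sup>2) + 2 powr (real n * (cond_ent P + \<delta>)) / K)"
  proof -
    have "1 / (t * K) = 2 powr (real n * (cond_ent P + \<delta>)) / K"
      unfolding t_def powr_minus by (simp add: field_simps)
    then show ?thesis
      using prob_cond_pmf_small[OF \<delta>] sum_blocks_pmf[OF total]
      by (intro mult_left_mono add_mono) (auto simp: N_def t_def)
  qed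
  finally show ?thesis unfolding N_def .
qed

end

definition marg_at :: "'w set \<Rightarrow> ('w \<Rightarrow> real) \<Rightarrow> ('w \<Rightarrow> 'k) \<Rightarrow> 'w \<Rightarrow> real" where
  "marg_at D p F w = marg D p F (F w)"

lemma marg_eq_sum: "marg D p F k = (\<Sum>w\<in>D. p w * (if F w = k then 1 else 0))"
  unfolding marg_def by (intro sum.cong refl) simp

lemma marg_at_eq_sum: "marg_at D p F w = (\<Sum>w'\<in>D. p w' * (if F w' = F w then 1 else 0))"
  unfolding marg_at_def marg_def by (intro sum.cong refl) simp

lemma sum_marg_mult:
  assumes "finite D"
  shows "(\<Sum>k\<in>F`D. marg D p F k * \<phi> k) = (\<Sum>w\<in>D. p w * \<phi> (F w))"
proof -
  have "(\<Sum>w\<in>D. p w * \<phi> (F w)) = (\<Sum>k\<in>F`D. \<Sum>w\<in>{w\<in>D. F w = k}. p w * \<phi> (F w))"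
    by (rule sum.image_gen) fact
  also have "\<dots> = (\<Sum>k\<in>F`D. marg D p F k * \<phi> k)"
  proof (intro sum.cong refl)
    fix k
    have "(\<Sum>w\<in>{w\<in>D. F w = k}. p w * \<phi> (F w)) = (\<Sum>w\<in>{w\<in>D. F w = k}. p w) * \<phi> k"
      by (simp add: sum_distrib_right)
    also have "(\<Sum>w\<in>{w\<in>D. F w = k}. p w) = marg D p F k"
      unfolding marg_def using assms by (simp add: sum.inter_filter)
    finally show "(\<Sum>w\<in>{w\<in>D. F w = k}. p w * \<phi> (F w)) = marg D p F k * \<phi> k" .
  qed
  finally show ?thesis by simp
qed

lemma cond_entropy_eq_sum:
  assumes "finite D"
  shows "cond_entropy D p f g = - (\<Sum>w\<in>D. p w *
     (if marg_at D p (\<lambda>w. (f w, g w)) w = 0 then 0 else log 2 (marg_at D p (\<lambda>w. (f w, g w)) w / marg_at D p g w)))"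
proof -
  define \<phi> where "\<phi> k = (if marg D p (\<lambda>w. (f w, g w)) k = 0 then 0
      else log 2 (marg D p (\<lambda>w. (f w, g w)) k / marg D p g (snd k)))" for k
  have "(\<lambda>(a, c). let pac = marg D p (\<lambda>w. (f w, g w)) (a, c); pc = marg D p g c
          in if pac = 0 then 0 else pac * log 2 (pac / pc)) = (\<lambda>k. marg D p (\<lambda>w. (f w, g w)) k * \<phi> k)"
    by (auto simp: Let_def fun_eq_iff \<phi>_def)
  then have "cond_entropy D p f g = - (\<Sum>k\<in>(\<lambda>w. (f w, g w))`D. marg D p (\<lambda>w. (f w, g w)) k * \<phi> k)"
    unfolding cond_entropy_def by simp
  also have "\<dots> = - (\<Sum>w\<in>D. p w * \<phi> (f w, g w))"
    using sum_marg_mult[OF assms, where F="\<lambda>w. (f w, g w)" and p=p and \<phi>=\<phi>] by simp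
  finally show ?thesis unfolding \<phi>_def marg_at_def by (simp cong: if_cong)
qed

lemma cond_mutual_info_eq_sum:
  assumes "finite D"
  shows "cond_mutual_info D p f g h = (\<Sum>w\<in>D. p w *
     (if marg_at D p (\<lambda>w. (f w, g w, h w)) w = 0 then 0 else
        log 2 (marg_at D p (\<lambda>w. (f w, g w, h w)) w * marg_at D p h w /
          (marg_at D p (\<lambda>w. (f w, h w)) w * marg_at D p (\<lambda>w. (g w, h w)) w))))"
proof -
  define \<phi> where "\<phi> k = (if marg D p (\<lambda>w. (f w, g w, h w)) k = 0 then 0
      else log 2 (marg D p (\<lambda>w. (f w, g w, h w)) k * marg D p h (snd (snd k)) /
        (marg D p (\<lambda>w. (f w, h w)) (fst k, snd (snd k)) * marg D p (\<lambda>w. (g w, h w)) (fst (snd k), snd (snd k)))))" for k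
  have "(\<lambda>(a, b, c). let pabc = marg D p (\<lambda>w. (f w, g w, h w)) (a, b, c);
              pac = marg D p (\<lambda>w. (f w, h w)) (a, c);
              pbc = marg D p (\<lambda>w. (g w, h w)) (b, c);
              pc = marg D p h c
          in if pabc = 0 then 0 else pabc * log 2 (pabc * pc / (pac * pbc)))
      = (\<lambda>k. marg D p (\<lambda>w. (f w, g w, h w)) k * \<phi> k)"
    by (auto simp: Let_def fun_eq_iff \<phi>_def)
  then have "cond_mutual_info D p f g h = (\<Sum>k\<in>(\<lambda>w. (f w, g w, h w))`D. marg D p (\<lambda>w. (f w, g w, h w)) k * \<phi> k)"
    unfolding cond_mutual_info_def by simp
  also have "\<dots> = (\<Sum>w\<in>D. p w * \<phi> (f w, g w, h w))"
    using sum_marg_mult[OF assms, where F="\<lambda>w. (f w, g w, h w)" and p=p and \<phi>=\<phi>] by simp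
  finally show ?thesis unfolding \<phi>_def marg_at_def by (simp cong: if_cong)
qed

locale finite_weights =
  fixes D :: "'w set" and p :: "'w \<Rightarrow> real"
  assumes finite_D: "finite D" and nonneg: "\<And>w. p w \<ge> 0"
begin

lemma weight_le_marg_at: "w \<in> D \<Longrightarrow> marg_at D p F w \<ge> p w"
  unfolding marg_at_def marg_def
  using member_le_sum[of w D "\<lambda>w'. if F w' = F w then p w' else 0"] finite_D nonneg by auto

lemma marg_at_nonneg: "marg_at D p F w \<ge> 0"
  unfolding marg_at_def marg_def using nonneg by (simp add: sum_nonneg)

lemma marg_at_mono: assumes a: "\<And>w'. F w' = F w \<Longrightarrow> G w' = G w" shows "marg_at D p F w \<le> marg_at D p G w"
  unfolding marg_at_def marg_def
proof (rule sum_mono)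
  fix w' show "(if F w' = F w then p w' else 0) \<le> (if G w' = G w then p w' else 0)"
  proof (cases "F w' = F w")
    case True
    then have "G w' = G w" by (rule a)
    then show ?thesis using True by simp
  next
    case False then show ?thesis using nonneg[of w'] by simp
  qed
qed

lemma marg_at_cong: "(\<And>w'. F w' = F w \<longleftrightarrow> G w' = G w) \<Longrightarrow> marg_at D p F w = marg_at D p G w"
  unfolding marg_at_def marg_def by (intro sum.cong refl) (simp only:)

lemma cond_entropy_chain_rule:
  "cond_entropy D p f (\<lambda>w. (g w, h w)) + cond_mutual_info D p f g h = cond_entropy D p f h"
proof -
  define m3 where "m3 = marg_at D p (\<lambda>w. (f w, g w, h w))"
  define mh where "mh = marg_at D p h"
  define mfh where "mfh = marg_at D p (\<lambda>w. (f w, h w))"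
  define mgh where "mgh = marg_at D p (\<lambda>w. (g w, h w))"
  define A where "A w = p w * (if m3 w = 0 then 0 else log 2 (m3 w / mgh w))" for w
  define B where "B w = p w * (if m3 w = 0 then 0 else log 2 (m3 w * mh w / (mfh w * mgh w)))" for w
  define C where "C w = p w * (if mfh w = 0 then 0 else log 2 (mfh w / mh w))" for w
  have pt: "B w - A w = - C w" if w: "w \<in> D" for w
  proof (cases "p w = 0")
    case False
    then have pw: "p w > 0" using nonneg[of w] by simp
    have a: "m3 w > 0" "mh w > 0" "mfh w > 0" "mgh w > 0"
      unfolding m3_def mh_def mfh_def mgh_def using weight_le_marg_at[OF w] pw by (meson less_le_trans)+
    have "log 2 (m3 w * mh w / (mfh w * mgh w)) = log 2 (m3 w) + log 2 (mh w) - log 2 (mfh w) - log 2 (mgh w)"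
      using a by (simp add: log_mult log_divide)
    moreover have "log 2 (m3 w / mgh w) = log 2 (m3 w) - log 2 (mgh w)" using a by (simp add: log_divide)
    moreover have "log 2 (mfh w / mh w) = log 2 (mfh w) - log 2 (mh w)" using a by (simp add: log_divide)
    ultimately show ?thesis using a unfolding A_def B_def C_def by (simp add: right_diff_distrib distrib_left)
  qed (simp add: A_def B_def C_def)
  have eq: "marg_at D p (\<lambda>w. (f w, (g w, h w))) = m3"
    unfolding m3_def by (rule ext, rule marg_at_cong) auto
  have "cond_entropy D p f (\<lambda>w. (g w, h w)) = - (\<Sum>w\<in>D. A w)"
    unfolding cond_entropy_eq_sum[OF finite_D] eq A_def mgh_def ..
  moreover have "cond_mutual_info D p f g h = (\<Sum>w\<in>D. B w)"
    unfolding cond_mutual_info_eq_sum[OF finite_D] B_def m3_def mh_def mfh_def mgh_def ..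
  moreover have "cond_entropy D p f h = - (\<Sum>w\<in>D. C w)"
    unfolding cond_entropy_eq_sum[OF finite_D] C_def mfh_def mh_def ..
  moreover have "(\<Sum>w\<in>D. B w - A w) = (\<Sum>w\<in>D. - C w)" by (rule sum.cong) (use pt in auto)
  ultimately show ?thesis by (simp add: sum_subtractf sum_negf)
qed

lemma cond_entropy_nonneg: "cond_entropy D p f g \<ge> 0"
  unfolding cond_entropy_eq_sum[OF finite_D]
proof -
  have "p w * (if marg_at D p (\<lambda>w. (f w, g w)) w = 0 then 0
      else log 2 (marg_at D p (\<lambda>w. (f w, g w)) w / marg_at D p g w)) \<le> 0"
    if w: "w \<in> D" for w
  proof (cases "p w = 0")
    case False
    then have pw: "p w > 0" using nonneg[of w] by simp
    have a: "marg_at D p (\<lambda>w. (f w, g w)) w > 0" using weight_le_marg_at[OF w] pw by (meson less_le_trans)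
    have b: "marg_at D p (\<lambda>w. (f w, g w)) w \<le> marg_at D p g w" by (rule marg_at_mono) auto
    have "log 2 (marg_at D p (\<lambda>w. (f w, g w)) w / marg_at D p g w) \<le> 0"
      using a b by (simp add: divide_le_eq_1)
    then show ?thesis using pw by (simp add: mult_nonneg_nonpos)
  qed simp
  then show "0 \<le> - (\<Sum>w\<in>D. p w * (if marg_at D p (\<lambda>w. (f w, g w)) w = 0 then 0
      else log 2 (marg_at D p (\<lambda>w. (f w, g w)) w / marg_at D p g w)))"
    by (simp add: sum_nonpos)
qed


lemma sum_cmi_ratio_fibre_le:
  "(\<Sum>w\<in>D. p w * (if (f w1, h w1) = (f w, h w) then p w1 else 0) * (if (g w2, h w2) = (g w, h w) then p w2 else 0) /
      (marg_at D p (\<lambda>w. (f w, g w, h w)) w * marg_at D p h w))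
    \<le> (if h w2 = h w1 then p w1 * p w2 / marg_at D p h w1 else 0)"
proof (cases "h w2 = h w1")
  case same_h: True
  define c where "c = (\<Sum>w\<in>D. if (f w, g w, h w) = (f w1, g w2, h w1) then p w else 0)"
  have "(\<Sum>w\<in>D. p w * (if (f w1, h w1) = (f w, h w) then p w1 else 0) * (if (g w2, h w2) = (g w, h w) then p w2 else 0) /
      (marg_at D p (\<lambda>w. (f w, g w, h w)) w * marg_at D p h w))
    = (\<Sum>w\<in>D. p w1 * p w2 / (c * marg_at D p h w1) * (if (f w, g w, h w) = (f w1, g w2, h w1) then p w else 0))"
  proof (rule sum.cong[OF refl])
    fix w
    show "p w * (if (f w1, h w1) = (f w, h w) then p w1 else 0) * (if (g w2, h w2) = (g w, h w) then p w2 else 0) /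
        (marg_at D p (\<lambda>w. (f w, g w, h w)) w * marg_at D p h w)
      = p w1 * p w2 / (c * marg_at D p h w1) * (if (f w, g w, h w) = (f w1, g w2, h w1) then p w else 0)"
    proof (cases "(f w, g w, h w) = (f w1, g w2, h w1)")
      case True
      then have "marg_at D p (\<lambda>w. (f w, g w, h w)) w = c" "marg_at D p h w = marg_at D p h w1"
        unfolding marg_at_def marg_def c_def by simp_all
      then show ?thesis using True same_h by auto
    qed (use same_h in auto)
  qed
  also have "\<dots> = p w1 * p w2 / (c * marg_at D p h w1) * c"
    by (simp only: c_def sum_distrib_left)
  also have "\<dots> \<le> p w1 * p w2 / marg_at D p h w1"
    using nonneg[of w1] nonneg[of w2] marg_at_nonneg[of h w1] by (cases "c = 0") auto
  finally show ?thesis using same_h by simp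
next
  case False
  then have "(\<Sum>w\<in>D. p w * (if (f w1, h w1) = (f w, h w) then p w1 else 0) *
      (if (g w2, h w2) = (g w, h w) then p w2 else 0) /
      (marg_at D p (\<lambda>w. (f w, g w, h w)) w * marg_at D p h w)) = 0"
    by (intro sum.neutral ballI) auto
  with False show ?thesis by simp
qed

text \<open>The ratio is \<open>q/p\<close> for the pmf \<open>q(f, g, h) = p(f, h) p(g, h) / p(h)\<close>, so its \<open>p\<close>-mean is at most \<open>1\<close>.\<close>

lemma sum_cmi_ratio_le:
  "(\<Sum>w\<in>D. p w * marg_at D p (\<lambda>w. (f w, h w)) w * marg_at D p (\<lambda>w. (g w, h w)) w /
       (marg_at D p (\<lambda>w. (f w, g w, h w)) w * marg_at D p h w)) \<le> (\<Sum>w\<in>D. p w)"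
proof -
  define T where "T w w1 w2 = p w * (if (f w1, h w1) = (f w, h w) then p w1 else 0) *
      (if (g w2, h w2) = (g w, h w) then p w2 else 0) /
      (marg_at D p (\<lambda>w. (f w, g w, h w)) w * marg_at D p h w)" for w w1 w2
  have "(\<Sum>w\<in>D. p w * marg_at D p (\<lambda>w. (f w, h w)) w * marg_at D p (\<lambda>w. (g w, h w)) w /
       (marg_at D p (\<lambda>w. (f w, g w, h w)) w * marg_at D p h w)) = (\<Sum>w\<in>D. \<Sum>w2\<in>D. \<Sum>w1\<in>D. T w w1 w2)"
    unfolding T_def marg_at_def[of _ _ "\<lambda>w. (f w, h w)"] marg_at_def[of _ _ "\<lambda>w. (g w, h w)"] marg_def
    by (simp add: sum_distrib_left sum_distrib_right sum_divide_distrib)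
  also have "\<dots> = (\<Sum>w1\<in>D. \<Sum>w2\<in>D. \<Sum>w\<in>D. T w w1 w2)"
    by (subst sum.swap, subst (2) sum.swap, subst sum.swap) (rule refl)
  also have "\<dots> \<le> (\<Sum>w1\<in>D. \<Sum>w2\<in>D. if h w2 = h w1 then p w1 * p w2 / marg_at D p h w1 else 0)"
    unfolding T_def by (intro sum_mono sum_cmi_ratio_fibre_le)
  also have "\<dots> = (\<Sum>w1\<in>D. p w1 / marg_at D p h w1 * marg_at D p h w1)"
    by (intro sum.cong refl) (simp add: marg_at_def marg_def sum_distrib_left eq_commute if_distrib cong: if_cong)
  also have "\<dots> \<le> (\<Sum>w1\<in>D. p w1)"
    by (intro sum_mono) (use nonneg in auto)
  finally show ?thesis .
qed

lemma cond_mutual_info_nonneg: "cond_mutual_info D p f g h \<ge> 0"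
proof -
  define m3 where "m3 = marg_at D p (\<lambda>w. (f w, g w, h w))"
  define mh where "mh = marg_at D p h"
  define mfh where "mfh = marg_at D p (\<lambda>w. (f w, h w))"
  define mgh where "mgh = marg_at D p (\<lambda>w. (g w, h w))"
  have pt: "p w * (if m3 w = 0 then 0 else log 2 (m3 w * mh w / (mfh w * mgh w)))
     \<ge> (p w - p w * mfh w * mgh w / (m3 w * mh w)) / ln 2" if w: "w \<in> D" for w
  proof (cases "p w = 0")
    case False
    then have pw: "p w > 0" using nonneg[of w] by simp
    have a: "m3 w > 0" "mh w > 0" "mfh w > 0" "mgh w > 0"
      unfolding m3_def mh_def mfh_def mgh_def using weight_le_marg_at[OF w] pw by (meson less_le_trans)+
    define r where "r = m3 w * mh w / (mfh w * mgh w)"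
    have r: "r > 0" using a by (simp add: r_def)
    have "ln (1/r) \<le> 1/r - 1" using r by (intro ln_le_minus_one) simp
    then have "1 - 1/r \<le> ln r" using r by (simp add: ln_div)
    then have "(1 - 1/r) / ln 2 \<le> log 2 r" unfolding log_def by (simp add: divide_right_mono)
    then have "p w * ((1 - 1/r) / ln 2) \<le> p w * log 2 r" using pw by (intro mult_left_mono) auto
    moreover have "p w * ((1 - 1/r) / ln 2) = (p w - p w * mfh w * mgh w / (m3 w * mh w)) / ln 2"
      using a by (simp add: r_def field_simps)
    ultimately show ?thesis using a by (simp add: r_def)
  qed simp
  have "(\<Sum>w\<in>D. (p w - p w * mfh w * mgh w / (m3 w * mh w)) / ln 2)
      \<le> cond_mutual_info D p f g h"
    unfolding cond_mutual_info_eq_sum[OF finite_D] m3_def[symmetric] mh_def[symmetric]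
      mfh_def[symmetric] mgh_def[symmetric]
    by (rule sum_mono) (rule pt)
  moreover have "(\<Sum>w\<in>D. (p w - p w * mfh w * mgh w / (m3 w * mh w)) / ln 2) =
       ((\<Sum>w\<in>D. p w) - (\<Sum>w\<in>D. p w * mfh w * mgh w / (m3 w * mh w))) / ln 2"
    by (simp add: sum_divide_distrib[symmetric] sum_subtractf)
  moreover have "(\<Sum>w\<in>D. p w * mfh w * mgh w / (m3 w * mh w)) \<le> (\<Sum>w\<in>D. p w)"
    using sum_cmi_ratio_le unfolding m3_def mh_def mfh_def mgh_def .
  ultimately show ?thesis by (smt (verit) divide_nonneg_pos ln_gt_zero)
qed

lemma marg_at_erased:
  assumes erased: "\<And>\<phi>. (\<Sum>w\<in>D. p w * (if a w = 0 then \<phi> (f w, g w) else 0)) = (1 - l) * (\<Sum>w\<in>D. p w * \<phi> (f w, g w))"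
    and "a w = 0"
  shows "marg_at D p (\<lambda>w. (f w, a w, g w)) w = (1 - l) * marg D p (\<lambda>w. (f w, g w)) (f w, g w)"
    and "marg_at D p (\<lambda>w. (a w, g w)) w = (1 - l) * marg D p g (g w)"
proof -
  have "marg_at D p (\<lambda>w. (f w, a w, g w)) w =
      (\<Sum>w'\<in>D. p w' * (if a w' = 0 then (if (f w', g w') = (f w, g w) then 1 else 0) else 0))"
    unfolding marg_at_eq_sum using \<open>a w = 0\<close> by (intro sum.cong refl) auto
  then show "marg_at D p (\<lambda>w. (f w, a w, g w)) w = (1 - l) * marg D p (\<lambda>w. (f w, g w)) (f w, g w)"
    using erased[of "\<lambda>k. if k = (f w, g w) then 1 else 0"] by (simp add: marg_eq_sum)
  have "marg_at D p (\<lambda>w. (a w, g w)) w =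
      (\<Sum>w'\<in>D. p w' * (if a w' = 0 then (if snd (f w', g w') = g w then 1 else 0) else 0))"
    unfolding marg_at_eq_sum using \<open>a w = 0\<close> by (intro sum.cong refl) auto
  then show "marg_at D p (\<lambda>w. (a w, g w)) w = (1 - l) * marg D p g (g w)"
    using erased[of "\<lambda>k. if snd k = g w then 1 else 0"] by (simp add: marg_eq_sum)
qed

lemma marg_at_revealed:
  assumes erasure: "\<And>w. w \<in> D \<Longrightarrow> p w \<noteq> 0 \<Longrightarrow> a w = 0 \<or> a w = enc (f w)"
    and "inj enc" and w0: "w0 \<in> D" "p w0 \<noteq> 0" "a w0 \<noteq> 0"
  shows "marg_at D p (\<lambda>w. (f w, a w, g w)) w0 = marg_at D p (\<lambda>w. (a w, g w)) w0"
  unfolding marg_at_eq_sum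
proof (intro sum.cong refl)
  fix w assume "w \<in> D"
  then have "p w \<noteq> 0 \<Longrightarrow> a w = a w0 \<Longrightarrow> f w = f w0"
    using erasure[of w] erasure[OF w0(1,2)] w0(3) \<open>inj enc\<close> by (auto dest: injD)
  then show "p w * (if (f w, a w, g w) = (f w0, a w0, g w0) then 1 else 0) =
      p w * (if (a w, g w) = (a w0, g w0) then 1 else 0)"
    by (cases "p w = 0") auto
qed

text \<open>Side information \<open>(A, S)\<close> where \<open>A\<close> is either an erasure \<open>0\<close>, which happens with probability
  \<open>1 - l\<close> independently of \<open>(X, S)\<close>, or reveals \<open>X\<close> completely.\<close>

lemma cond_entropy_erased_side_info:
  assumes erasure: "\<And>w. w \<in> D \<Longrightarrow> p w \<noteq> 0 \<Longrightarrow> a w = 0 \<or> a w = enc (f w)"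
    and enc: "inj enc" "\<And>x. enc x \<noteq> 0"
    and erased: "\<And>\<phi>. (\<Sum>w\<in>D. p w * (if a w = 0 then \<phi> (f w, g w) else 0)) = (1 - l) * (\<Sum>w\<in>D. p w * \<phi> (f w, g w))"
  shows "cond_entropy D p f (\<lambda>w. (a w, g w)) = (1 - l) * cond_entropy D p f g"
proof -
  define m1 where "m1 = marg_at D p (\<lambda>w. (f w, a w, g w))"
  define m2 where "m2 = marg_at D p (\<lambda>w. (a w, g w))"
  define \<psi> where "\<psi> k = (if marg D p (\<lambda>w. (f w, g w)) k = 0 then 0
      else log 2 (marg D p (\<lambda>w. (f w, g w)) k / marg D p g (snd k)))" for k
  have pointwise: "p w * (if m1 w = 0 then 0 else log 2 (m1 w / m2 w)) = p w * (if a w = 0 then \<psi> (f w, g w) else 0)"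
    if w: "w \<in> D" for w
  proof (cases "p w = 0")
    case False
    then have m1_pos: "m1 w > 0"
      using weight_le_marg_at[OF w, of "\<lambda>w. (f w, a w, g w)"] nonneg[of w] unfolding m1_def by linarith
    show ?thesis
    proof (cases "a w = 0")
      case True
      note m = marg_at_erased[where a = a and f = f and g = g, OF erased True, folded m1_def m2_def]
      then have "1 - l \<noteq> 0" "marg D p (\<lambda>w. (f w, g w)) (f w, g w) \<noteq> 0"
        using m1_pos by auto
      then show ?thesis using True m m1_pos by (simp add: \<psi>_def)
    next
      case False
      have "m1 w = m2 w"
        unfolding m1_def m2_def
        using marg_at_revealed[where a = a and f = f and g = g, OF erasure enc(1) w \<open>p w \<noteq> 0\<close> False] .
      then show ?thesis using m1_pos False by simp
    qed
  qed simp
  have "cond_entropy D p f (\<lambda>w. (a w, g w)) = - (\<Sum>w\<in>D. p w * (if m1 w = 0 then 0 else log 2 (m1 w / m2 w)))"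
    unfolding cond_entropy_eq_sum[OF finite_D] m1_def m2_def ..
  also have "\<dots> = - (\<Sum>w\<in>D. p w * (if a w = 0 then \<psi> (f w, g w) else 0))"
    using sum.cong[OF refl pointwise] by simp
  also have "\<dots> = (1 - l) * cond_entropy D p f g"
    unfolding erased cond_entropy_eq_sum[OF finite_D] by (simp add: \<psi>_def marg_at_def cong: if_cong)
  finally show ?thesis .
qed

end

lemma cond_entropy_eq_cond_ent:
  fixes f :: "'w \<Rightarrow> 'x::finite" and g :: "'w \<Rightarrow> 's::finite"
  assumes "finite D"
  shows "cond_entropy D p f g = cond_ent (marg D p (\<lambda>w. (f w, g w)))"
proof -
  define P where "P = marg D p (\<lambda>w. (f w, g w))"
  define \<phi> where "\<phi> k = (if P k = 0 then 0 else P k * log 2 (P k / marg D p g (snd k)))" for k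
  have snd_marg: "snd_marg P c = marg D p g c" for c
  proof -
    have "snd_marg P c = (\<Sum>w\<in>D. \<Sum>x\<in>UNIV. if x = f w then (if g w = c then p w else 0) else 0)"
      unfolding snd_marg_def P_def marg_def by (subst sum.swap) (auto intro!: sum.cong)
    then show ?thesis by (simp add: marg_def)
  qed
  have "cond_entropy D p f g = - (\<Sum>k\<in>(\<lambda>w. (f w, g w)) ` D. \<phi> k)"
    unfolding cond_entropy_def by (intro arg_cong[where f = uminus] sum.cong) (auto simp: \<phi>_def P_def Let_def)
  also have "\<dots> = - (\<Sum>k\<in>UNIV. \<phi> k)"
    by (intro arg_cong[where f = uminus] sum.mono_neutral_left)
      (auto simp: \<phi>_def P_def marg_def intro!: sum.neutral)
  also have "\<dots> = cond_ent P"
    unfolding cond_ent_def self_info_def cond_pmf_def snd_marg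
    by (auto simp: \<phi>_def sum_negf[symmetric] intro!: sum.cong)
  finally show ?thesis unfolding P_def .
qed
section \<open>The single-letter region\<close>

definition aux_x :: "nat \<times> nat \<times> 'x \<times> 'u \<times> 'v \<Rightarrow> 'x" where "aux_x = (\<lambda>(a, b, x, u, v). x)"
definition aux_a :: "nat \<times> nat \<times> 'x \<times> 'u \<times> 'v \<Rightarrow> nat" where "aux_a = (\<lambda>(a, b, x, u, v). a)"
definition aux_b :: "nat \<times> nat \<times> 'x \<times> 'u \<times> 'v \<Rightarrow> nat" where "aux_b = (\<lambda>(a, b, x, u, v). b)"
definition aux_u :: "nat \<times> nat \<times> 'x \<times> 'u \<times> 'v \<Rightarrow> 'u" where "aux_u = (\<lambda>(a, b, x, u, v). u)"
definition aux_v :: "nat \<times> nat \<times> 'x \<times> 'u \<times> 'v \<Rightarrow> 'v" where "aux_v = (\<lambda>(a, b, x, u, v). v)"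

lemma Rstar_eq:
  "Rstar p = {(R0, R1, R2).
      R0 \<ge> max (cond_entropy aux_dom p aux_x (\<lambda>w. (aux_a w, aux_u w)))
               (cond_entropy aux_dom p aux_x (\<lambda>w. (aux_b w, aux_v w))) \<and>
      R1 \<ge> cond_mutual_info aux_dom p aux_x aux_a aux_u \<and>
      R2 \<ge> cond_mutual_info aux_dom p aux_x aux_b aux_v}"
proof -
  have eqs: "(\<lambda>(a::nat, b::nat, x, u, v). x) = aux_x" "(\<lambda>(a::nat, b::nat, x, u, v). a) = aux_a"
    "(\<lambda>(a::nat, b::nat, x, u, v). b) = aux_b" "(\<lambda>(a::nat, b::nat, x, u, v). u) = aux_u"
    "(\<lambda>(a::nat, b::nat, x, u, v). v) = aux_v"
    "(\<lambda>(a::nat, b::nat, x, u, v). (a, u)) = (\<lambda>w. (aux_a w, aux_u w))"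
    "(\<lambda>(a::nat, b::nat, x, u, v). (b, v)) = (\<lambda>w. (aux_b w, aux_v w))"
    by (auto simp: fun_eq_iff aux_x_def aux_a_def aux_b_def aux_u_def aux_v_def)
  show ?thesis unfolding Rstar_def eqs ..
qed

lemma finite_aux_dom: "finite (aux_dom :: (nat \<times> nat \<times> 'x::finite \<times> 'u::finite \<times> 'v::finite) set)"
  unfolding aux_dom_def by simp

lemma sum_aux_dom:
  "sum G (aux_dom :: (nat \<times> nat \<times> 'x::finite \<times> 'u::finite \<times> 'v::finite) set) =
     (\<Sum>t\<in>UNIV. \<Sum>a\<le>CARD('x). \<Sum>b\<le>CARD('x). G (a, b, t))"
proof -
  have "sum G (aux_dom :: (nat \<times> nat \<times> 'x \<times> 'u \<times> 'v) set) =
      (\<Sum>a\<le>CARD('x). \<Sum>b\<le>CARD('x). \<Sum>t\<in>UNIV. G (a, b, t))"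
    unfolding aux_dom_def by (simp add: sum.cartesian_product)
  also have "\<dots> = (\<Sum>a\<le>CARD('x). \<Sum>t\<in>UNIV. \<Sum>b\<le>CARD('x). G (a, b, t))"
    by (intro sum.cong refl sum.swap)
  also have "\<dots> = (\<Sum>t\<in>UNIV. \<Sum>a\<le>CARD('x). \<Sum>b\<le>CARD('x). G (a, b, t))"
    by (rule sum.swap)
  finally show ?thesis .
qed

lemma sum_Q_XUV_mult:
  fixes Q :: "'x::finite \<times> 'y::finite \<times> 'u::finite \<times> 'v::finite \<Rightarrow> real"
  shows "(\<Sum>t\<in>UNIV. Q_XUV Q (fst t) (fst (snd t)) (snd (snd t)) * G t) =
         (\<Sum>z\<in>UNIV. Q z * G (fst z, snd (snd z)))"
proof -
  have bij: "bij_betw (\<lambda>(t, y). (fst t, y, snd t)) (UNIV \<times> UNIV) (UNIV :: ('x \<times> 'y \<times> 'u \<times> 'v) set)"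
    by (rule bij_betwI') (auto simp: image_iff)
  have "(\<Sum>z\<in>UNIV. Q z * G (fst z, snd (snd z))) = (\<Sum>(t, y)\<in>UNIV \<times> UNIV. Q (fst t, y, snd t) * G t)"
    using sum.reindex_bij_betw[OF bij, of "\<lambda>z. Q z * G (fst z, snd (snd z))"] by (simp add: split_def)
  also have "\<dots> = (\<Sum>t\<in>UNIV. Q_XUV Q (fst t) (fst (snd t)) (snd (snd t)) * G t)"
    by (simp add: sum.cartesian_product Q_XUV_def sum_distrib_right)
  finally show ?thesis by simp
qed

definition has_source_marg ::
  "('x::finite \<times> 'y::finite \<times> 'u::finite \<times> 'v::finite \<Rightarrow> real) \<Rightarrow> (nat \<times> nat \<times> 'x \<times> 'u \<times> 'v \<Rightarrow> real) \<Rightarrow> bool"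
where
  "has_source_marg Q p \<longleftrightarrow>
     (\<forall>x u v. (\<Sum>(a, b)\<in>{..CARD('x)} \<times> {..CARD('x)}. p (a, b, x, u, v)) = Q_XUV Q x u v)"

lemma sum_aux_dom_source:
  fixes Q :: "'x::finite \<times> 'y::finite \<times> 'u::finite \<times> 'v::finite \<Rightarrow> real"
    and p :: "nat \<times> nat \<times> 'x \<times> 'u \<times> 'v \<Rightarrow> real"
  assumes "has_source_marg Q p"
  shows "(\<Sum>w\<in>aux_dom. p w * G (aux_x w, aux_u w, aux_v w)) = (\<Sum>z\<in>UNIV. Q z * G (fst z, snd (snd z)))"
proof -
  have "(\<Sum>a\<le>CARD('x). \<Sum>b\<le>CARD('x). p (a, b, t)) = Q_XUV Q (fst t) (fst (snd t)) (snd (snd t))"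
    for t :: "'x \<times> 'u \<times> 'v"
    using assms by (cases t) (simp add: has_source_marg_def sum.cartesian_product)
  then have "(\<Sum>w\<in>aux_dom. p w * G (aux_x w, aux_u w, aux_v w)) =
      (\<Sum>t\<in>UNIV. Q_XUV Q (fst t) (fst (snd t)) (snd (snd t)) * G t)"
    by (simp add: sum_aux_dom aux_x_def aux_u_def aux_v_def split_beta sum_distrib_right[symmetric])
  also have "\<dots> = (\<Sum>z\<in>UNIV. Q z * G (fst z, snd (snd z)))" by (rule sum_Q_XUV_mult)
  finally show ?thesis .
qed

text \<open>The joint pmf of \<open>X\<close> and a decoder's side information \<open>\<sigma> (U, V)\<close>; \<open>\<sigma> = fst\<close> for the
  \<open>X\<close>-decoder and \<open>\<sigma> = snd\<close> for the \<open>Y\<close>-decoder.\<close>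

definition side_pmf ::
  "('x::finite \<times> 'y::finite \<times> 'u::finite \<times> 'v::finite \<Rightarrow> real) \<Rightarrow> ('u \<times> 'v \<Rightarrow> 's) \<Rightarrow> 'x \<times> 's \<Rightarrow> real"
where
  "side_pmf Q \<sigma> w = (\<Sum>z\<in>{z. (fst z, \<sigma> (snd (snd z))) = w}. Q z)"

lemma pair_pmf_side_pmf:
  assumes "\<And>z. Q z \<ge> 0" "sum Q UNIV = 1"
  shows "pair_pmf (side_pmf Q \<sigma>)"
proof
  show "side_pmf Q \<sigma> w \<ge> 0" for w
    using assms(1) by (simp add: side_pmf_def sum_nonneg)
  show "sum (side_pmf Q \<sigma>) UNIV = 1"
    using sum_mult_comp_eq_sum_fibres[of Q "\<lambda>_. 1" "\<lambda>z. (fst z, \<sigma> (snd (snd z)))"] assms(2)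
    by (simp add: side_pmf_def[abs_def])
qed

lemma marg_aux_side:
  assumes "has_source_marg Q p"
  shows "marg aux_dom p (\<lambda>w. (aux_x w, \<sigma> (aux_u w, aux_v w))) = side_pmf Q \<sigma>"
proof
  fix k
  show "marg aux_dom p (\<lambda>w. (aux_x w, \<sigma> (aux_u w, aux_v w))) k = side_pmf Q \<sigma> k"
    using sum_aux_dom_source[OF assms, of "\<lambda>t. if (fst t, \<sigma> (snd t)) = k then 1 else 0"]
    by (simp add: marg_eq_sum side_pmf_def sum.If_cases if_distrib cong: if_cong)
qed

lemma cond_entropy_aux_side:
  fixes \<sigma> :: "'u::finite \<times> 'v::finite \<Rightarrow> 's::finite"
  assumes "has_source_marg Q p"
  shows "cond_entropy aux_dom p aux_x (\<lambda>w. \<sigma> (aux_u w, aux_v w)) = cond_ent (side_pmf Q \<sigma>)"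
  by (simp add: cond_entropy_eq_cond_ent finite_aux_dom marg_aux_side[OF assms])

definition rate_polytope ::
  "('x::finite \<times> 'y::finite \<times> 'u::finite \<times> 'v::finite \<Rightarrow> real) \<Rightarrow> (real \<times> real \<times> real) set"
where
  "rate_polytope Q = {(R0, R1, R2). 0 \<le> R0 \<and> 0 \<le> R1 \<and> 0 \<le> R2 \<and>
     cond_ent (side_pmf Q fst) \<le> R0 + R1 \<and> cond_ent (side_pmf Q snd) \<le> R0 + R2}"

lemma closed_rate_polytope: "closed (rate_polytope Q)"
proof -
  have "rate_polytope Q = {R. 0 \<le> fst R \<and> 0 \<le> fst (snd R) \<and> 0 \<le> snd (snd R) \<and>
      cond_ent (side_pmf Q fst) \<le> fst R + fst (snd R) \<and> cond_ent (side_pmf Q snd) \<le> fst R + snd (snd R)}"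
    unfolding rate_polytope_def by auto
  also have "closed \<dots>"
    by (intro closed_Collect_conj closed_Collect_le continuous_intros)
  finally show ?thesis .
qed

lemma Rstar_subset_rate_polytope:
  assumes "p \<in> Pstar Q"
  shows "Rstar p \<subseteq> rate_polytope Q"
proof
  fix R assume "R \<in> Rstar p"
  then obtain R0 R1 R2 where R: "R = (R0, R1, R2)"
    and R0: "cond_entropy aux_dom p aux_x (\<lambda>w. (aux_a w, aux_u w)) \<le> R0"
      "cond_entropy aux_dom p aux_x (\<lambda>w. (aux_b w, aux_v w)) \<le> R0"
    and R12: "cond_mutual_info aux_dom p aux_x aux_a aux_u \<le> R1"
      "cond_mutual_info aux_dom p aux_x aux_b aux_v \<le> R2"
    unfolding Rstar_eq by auto
  have nonneg: "\<And>w. p w \<ge> 0" and marg: "has_source_marg Q p"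
    using assms unfolding Pstar_def has_source_marg_def by auto
  interpret finite_weights aux_dom p
    by unfold_locales (auto simp: nonneg finite_aux_dom)
  have "cond_entropy aux_dom p aux_x (\<lambda>w. (aux_a w, aux_u w)) + cond_mutual_info aux_dom p aux_x aux_a aux_u
      = cond_ent (side_pmf Q fst)"
    using cond_entropy_chain_rule[of aux_x aux_a aux_u] cond_entropy_aux_side[OF marg, of fst] by simp
  moreover have "cond_entropy aux_dom p aux_x (\<lambda>w. (aux_b w, aux_v w)) + cond_mutual_info aux_dom p aux_x aux_b aux_v
      = cond_ent (side_pmf Q snd)"
    using cond_entropy_chain_rule[of aux_x aux_b aux_v] cond_entropy_aux_side[OF marg, of snd] by simp
  moreover have "0 \<le> cond_entropy aux_dom p aux_x (\<lambda>w. (aux_a w, aux_u w))"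
    "0 \<le> cond_mutual_info aux_dom p aux_x aux_a aux_u" "0 \<le> cond_mutual_info aux_dom p aux_x aux_b aux_v"
    by (rule cond_entropy_nonneg cond_mutual_info_nonneg)+
  ultimately show "R \<in> rate_polytope Q"
    using R0 R12 unfolding R rate_polytope_def by auto
qed
text \<open>The corner points are attained by erasure side information: \<open>A\<close> equals an injective code
  \<open>enc X \<ge> 1\<close> of \<open>X\<close> with probability \<open>l\<^sub>1\<close> and the erasure symbol \<open>0\<close> otherwise, and
  likewise \<open>B\<close> with \<open>l\<^sub>2\<close>.  Then \<open>H(X|A,U) = (1 - l\<^sub>1) H(X|U)\<close>.\<close>

definition erasure_kernel :: "real \<Rightarrow> nat \<Rightarrow> nat \<Rightarrow> real" where
  "erasure_kernel l e a = (if a = e then l else if a = 0 then 1 - l else 0)"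

lemma sum_erasure_kernel:
  assumes "1 \<le> e" "e \<le> N"
  shows "(\<Sum>a\<le>N. erasure_kernel l e a) = 1"
proof -
  have "(\<Sum>a\<le>N. erasure_kernel l e a) = (\<Sum>a\<le>N. (if a = e then l else 0) + (if a = 0 then 1 - l else 0))"
    using assms by (intro sum.cong refl) (auto simp: erasure_kernel_def)
  also have "\<dots> = 1" using assms by (simp add: sum.distrib)
  finally show ?thesis .
qed

definition erasure_aux ::
  "('x::finite \<times> 'y::finite \<times> 'u \<times> 'v \<Rightarrow> real) \<Rightarrow> ('x \<Rightarrow> nat) \<Rightarrow> real \<Rightarrow> real \<Rightarrow> nat \<times> nat \<times> 'x \<times> 'u \<times> 'v \<Rightarrow> real"
where
  "erasure_aux Q enc l1 l2 w =
     (if fst w \<le> CARD('x) \<and> fst (snd w) \<le> CARD('x) then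
        erasure_kernel l1 (enc (fst (snd (snd w)))) (fst w) *
        erasure_kernel l2 (enc (fst (snd (snd w)))) (fst (snd w)) *
        Q_XUV Q (fst (snd (snd w))) (fst (snd (snd (snd w)))) (snd (snd (snd (snd w))))
      else 0)"

locale erasure_setting =
  fixes Q :: "'x::finite \<times> 'x \<times> 'u::finite \<times> 'v::finite \<Rightarrow> real"
    and enc :: "'x \<Rightarrow> nat" and l1 l2 :: real
  assumes Q_nonneg: "\<And>z. Q z \<ge> 0" and enc_inj: "inj enc" and enc_range: "\<And>x. enc x \<in> {1..CARD('x)}"
    and l1: "0 \<le> l1" "l1 \<le> 1" and l2: "0 \<le> l2" "l2 \<le> 1"
begin

abbreviation "p \<equiv> erasure_aux Q enc l1 l2"

lemma erasure_aux_nonneg: "p w \<ge> 0"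
proof -
  have "erasure_kernel l e a \<ge> 0" if "0 \<le> l" "l \<le> 1" for l e a
    using that by (simp add: erasure_kernel_def)
  moreover have "Q_XUV Q x u v \<ge> 0" for x u v
    using Q_nonneg by (simp add: Q_XUV_def sum_nonneg)
  ultimately show ?thesis
    using l1 l2 by (simp add: erasure_aux_def)
qed

lemma sum_erasure_aux:
  "(\<Sum>a\<le>CARD('x). \<Sum>b\<le>CARD('x). p (a, b, x, u, v)) = Q_XUV Q x u v"
  "(\<Sum>b\<le>CARD('x). p (0, b, x, u, v)) = (1 - l1) * Q_XUV Q x u v"
  "(\<Sum>a\<le>CARD('x). p (a, 0, x, u, v)) = (1 - l2) * Q_XUV Q x u v"
proof -
  have enc: "1 \<le> enc x" "enc x \<le> CARD('x)" using enc_range[of x] by auto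
  note kernel = sum_erasure_kernel[OF enc] erasure_kernel_def[of _ _ 0]
  have "(\<Sum>a\<le>CARD('x). \<Sum>b\<le>CARD('x). p (a, b, x, u, v)) =
      (\<Sum>a\<le>CARD('x). erasure_kernel l1 (enc x) a * (\<Sum>b\<le>CARD('x). erasure_kernel l2 (enc x) b * Q_XUV Q x u v))"
    by (simp add: erasure_aux_def sum_distrib_left mult.assoc)
  then show "(\<Sum>a\<le>CARD('x). \<Sum>b\<le>CARD('x). p (a, b, x, u, v)) = Q_XUV Q x u v"
    by (simp add: kernel flip: sum_distrib_right)
  have "(\<Sum>b\<le>CARD('x). p (0, b, x, u, v)) =
      erasure_kernel l1 (enc x) 0 * (\<Sum>b\<le>CARD('x). erasure_kernel l2 (enc x) b * Q_XUV Q x u v)"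
    by (simp add: erasure_aux_def sum_distrib_left mult.assoc)
  then show "(\<Sum>b\<le>CARD('x). p (0, b, x, u, v)) = (1 - l1) * Q_XUV Q x u v"
    using enc by (simp add: kernel flip: sum_distrib_right)
  have "(\<Sum>a\<le>CARD('x). p (a, 0, x, u, v)) =
      (\<Sum>a\<le>CARD('x). erasure_kernel l1 (enc x) a * Q_XUV Q x u v) * erasure_kernel l2 (enc x) 0"
    unfolding sum_distrib_right by (intro sum.cong refl) (simp add: erasure_aux_def)
  then show "(\<Sum>a\<le>CARD('x). p (a, 0, x, u, v)) = (1 - l2) * Q_XUV Q x u v"
    using enc by (simp add: kernel flip: sum_distrib_right)
qed

lemma has_source_marg_erasure_aux: "has_source_marg Q p"
  using sum_erasure_aux(1) by (simp add: has_source_marg_def sum.cartesian_product[symmetric])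

lemma marg_erasure_aux_x:
  "marg aux_dom p (\<lambda>(a, b, x, u, v). x) x =
     (\<Sum>t\<in>UNIV. if fst t = x then Q_XUV Q (fst t) (fst (snd t)) (snd (snd t)) else 0)"
  unfolding marg_def sum_aux_dom by (intro sum.cong refl) (auto simp: sum_erasure_aux(1) split_beta)

lemma marg_erasure_aux_xuv: "marg aux_dom p (\<lambda>(a, b, x, u, v). (x, u, v)) (x, u, v) = Q_XUV Q x u v"
proof -
  have "marg aux_dom p (\<lambda>(a, b, x, u, v). (x, u, v)) (x, u, v) =
      (\<Sum>t\<in>UNIV. if t = (x, u, v) then (\<Sum>a\<le>CARD('x). \<Sum>b\<le>CARD('x). p (a, b, t)) else 0)"
    unfolding marg_def sum_aux_dom by (intro sum.cong refl) auto
  then show ?thesis by (simp add: sum_erasure_aux(1))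
qed

lemma marg_erasure_aux_abx:
  "marg aux_dom p (\<lambda>(a, b, x, u, v). (a, b, x)) (a, b, x) =
     (if a \<le> CARD('x) \<and> b \<le> CARD('x) then
        erasure_kernel l1 (enc x) a * erasure_kernel l2 (enc x) b * marg aux_dom p (\<lambda>(a, b, x, u, v). x) x
      else 0)"
proof -
  have "marg aux_dom p (\<lambda>(a, b, x, u, v). (a, b, x)) (a, b, x) =
      (\<Sum>t\<in>UNIV. if a \<le> CARD('x) \<and> b \<le> CARD('x) \<and> fst t = x then p (a, b, t) else 0)"
    unfolding marg_def sum_aux_dom
  proof (intro sum.cong refl)
    fix t :: "'x \<times> 'u \<times> 'v"
    have "(\<Sum>a'\<le>CARD('x). \<Sum>b'\<le>CARD('x).
          if (case (a', b', t) of (a, b, x, u, v) \<Rightarrow> (a, b, x)) = (a, b, x) then p (a', b', t) else 0)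
       = (\<Sum>a'\<le>CARD('x). if a' = a then
          (\<Sum>b'\<le>CARD('x). if b' = b then (if fst t = x then p (a', b', t) else 0) else 0) else 0)"
      by (intro sum.cong refl) (auto simp: split_beta)
    then show "(\<Sum>a'\<le>CARD('x). \<Sum>b'\<le>CARD('x).
          if (case (a', b', t) of (a, b, x, u, v) \<Rightarrow> (a, b, x)) = (a, b, x) then p (a', b', t) else 0)
       = (if a \<le> CARD('x) \<and> b \<le> CARD('x) \<and> fst t = x then p (a, b, t) else 0)"
      by simp
  qed
  then show ?thesis
    unfolding marg_erasure_aux_x by (auto simp: sum_distrib_left erasure_aux_def intro!: sum.cong)
qed

lemma erasure_aux_in_Pstar: "p \<in> Pstar Q"
  unfolding Pstar_def
proof (intro CollectI conjI allI impI)
  show "\<And>w. w \<notin> aux_dom \<Longrightarrow> p w = 0"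
    by (auto simp: aux_dom_def erasure_aux_def)
  show "\<And>x u v. (\<Sum>(a, b)\<in>{..CARD('x)} \<times> {..CARD('x)}. p (a, b, x, u, v)) = Q_XUV Q x u v"
    using has_source_marg_erasure_aux by (simp add: has_source_marg_def)
  show "p (a, b, x, u, v) * marg aux_dom p (\<lambda>(a, b, x, u, v). x) x =
      marg aux_dom p (\<lambda>(a, b, x, u, v). (a, b, x)) (a, b, x) *
      marg aux_dom p (\<lambda>(a, b, x, u, v). (x, u, v)) (x, u, v)" for a b x u v
    unfolding marg_erasure_aux_xuv marg_erasure_aux_abx by (simp add: erasure_aux_def)
qed (rule erasure_aux_nonneg)

lemma erasure_aux_support:
  "p w \<noteq> 0 \<Longrightarrow> (aux_a w = 0 \<or> aux_a w = enc (aux_x w)) \<and> (aux_b w = 0 \<or> aux_b w = enc (aux_x w))"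
  by (cases w) (auto simp: erasure_aux_def erasure_kernel_def aux_a_def aux_b_def aux_x_def split: if_splits)

lemma erased_aux_a:
  "(\<Sum>w\<in>aux_dom. p w * (if aux_a w = 0 then \<phi> (aux_x w, aux_u w) else 0)) =
     (1 - l1) * (\<Sum>w\<in>aux_dom. p w * \<phi> (aux_x w, aux_u w))"
proof -
  have "(\<Sum>w\<in>aux_dom. p w * (if aux_a w = 0 then \<phi> (aux_x w, aux_u w) else 0)) =
      (\<Sum>t\<in>UNIV. \<Sum>a\<le>CARD('x). if a = 0 then (\<Sum>b\<le>CARD('x). p (0, b, t) * \<phi> (fst t, fst (snd t))) else 0)"
    unfolding sum_aux_dom by (intro sum.cong refl) (auto simp: aux_a_def aux_x_def aux_u_def split_beta)
  also have "\<dots> = (1 - l1) * (\<Sum>t\<in>UNIV. Q_XUV Q (fst t) (fst (snd t)) (snd (snd t)) * \<phi> (fst t, fst (snd t)))"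
  proof -
    have "(\<Sum>b\<le>CARD('x). p (0, b, t)) = (1 - l1) * Q_XUV Q (fst t) (fst (snd t)) (snd (snd t))" for t
      by (cases t) (simp add: sum_erasure_aux(2))
    then show ?thesis by (simp add: sum_distrib_left mult.assoc flip: sum_distrib_right)
  qed
  also have "\<dots> = (1 - l1) * (\<Sum>w\<in>aux_dom. p w * \<phi> (aux_x w, aux_u w))"
    using sum_aux_dom_source[OF has_source_marg_erasure_aux, of "\<lambda>t. \<phi> (fst t, fst (snd t))"]
    by (simp add: sum_Q_XUV_mult)
  finally show ?thesis .
qed

lemma erased_aux_b:
  "(\<Sum>w\<in>aux_dom. p w * (if aux_b w = 0 then \<phi> (aux_x w, aux_v w) else 0)) =
     (1 - l2) * (\<Sum>w\<in>aux_dom. p w * \<phi> (aux_x w, aux_v w))"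
proof -
  have "(\<Sum>w\<in>aux_dom. p w * (if aux_b w = 0 then \<phi> (aux_x w, aux_v w) else 0)) =
      (\<Sum>t\<in>UNIV. \<Sum>a\<le>CARD('x). p (a, 0, t) * \<phi> (fst t, snd (snd t)))"
    unfolding sum_aux_dom
    by (intro sum.cong refl) (auto simp: aux_b_def aux_x_def aux_v_def split_beta if_distrib cong: if_cong)
  also have "\<dots> = (1 - l2) * (\<Sum>t\<in>UNIV. Q_XUV Q (fst t) (fst (snd t)) (snd (snd t)) * \<phi> (fst t, snd (snd t)))"
  proof -
    have "(\<Sum>a\<le>CARD('x). p (a, 0, t)) = (1 - l2) * Q_XUV Q (fst t) (fst (snd t)) (snd (snd t))" for t
      by (cases t) (simp add: sum_erasure_aux(3))
    then show ?thesis by (simp add: sum_distrib_left mult.assoc flip: sum_distrib_right)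
  qed
  also have "\<dots> = (1 - l2) * (\<Sum>w\<in>aux_dom. p w * \<phi> (aux_x w, aux_v w))"
    using sum_aux_dom_source[OF has_source_marg_erasure_aux, of "\<lambda>t. \<phi> (fst t, snd (snd t))"]
    by (simp add: sum_Q_XUV_mult)
  finally show ?thesis .
qed

sublocale finite_weights aux_dom p
  by unfold_locales (auto simp: erasure_aux_nonneg finite_aux_dom)

lemma cond_entropy_erasure_aux:
  "cond_entropy aux_dom p aux_x (\<lambda>w. (aux_a w, aux_u w)) = (1 - l1) * cond_ent (side_pmf Q fst)"
  "cond_entropy aux_dom p aux_x (\<lambda>w. (aux_b w, aux_v w)) = (1 - l2) * cond_ent (side_pmf Q snd)"
proof -
  have enc_nonzero: "enc x \<noteq> 0" for x
    using enc_range[of x] by auto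
  have "cond_entropy aux_dom p aux_x (\<lambda>w. (aux_a w, aux_u w)) = (1 - l1) * cond_entropy aux_dom p aux_x aux_u"
    by (rule cond_entropy_erased_side_info[where a = aux_a and f = aux_x and g = aux_u,
        OF _ enc_inj enc_nonzero erased_aux_a])
      (use erasure_aux_support in blast)
  then show "cond_entropy aux_dom p aux_x (\<lambda>w. (aux_a w, aux_u w)) = (1 - l1) * cond_ent (side_pmf Q fst)"
    using cond_entropy_aux_side[OF has_source_marg_erasure_aux, of fst] by simp
  have "cond_entropy aux_dom p aux_x (\<lambda>w. (aux_b w, aux_v w)) = (1 - l2) * cond_entropy aux_dom p aux_x aux_v"
    by (rule cond_entropy_erased_side_info[where a = aux_b and f = aux_x and g = aux_v,
        OF _ enc_inj enc_nonzero erased_aux_b])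
      (use erasure_aux_support in blast)
  then show "cond_entropy aux_dom p aux_x (\<lambda>w. (aux_b w, aux_v w)) = (1 - l2) * cond_ent (side_pmf Q snd)"
    using cond_entropy_aux_side[OF has_source_marg_erasure_aux, of snd] by simp
qed

lemma cond_mutual_info_erasure_aux:
  "cond_mutual_info aux_dom p aux_x aux_a aux_u = l1 * cond_ent (side_pmf Q fst)"
  "cond_mutual_info aux_dom p aux_x aux_b aux_v = l2 * cond_ent (side_pmf Q snd)"
  using cond_entropy_chain_rule[of aux_x aux_a aux_u] cond_entropy_chain_rule[of aux_x aux_b aux_v]
    cond_entropy_aux_side[OF has_source_marg_erasure_aux, of fst]
    cond_entropy_aux_side[OF has_source_marg_erasure_aux, of snd]
    cond_entropy_erasure_aux
  by (simp_all add: algebra_simps)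

end

lemma erasure_probability:
  fixes R0 R1 H :: real
  assumes "0 \<le> R0" "0 \<le> R1" "0 \<le> H" "H \<le> R0 + R1"
  obtains l where "0 \<le> l" "l \<le> 1" "(1 - l) * H \<le> R0" "l * H \<le> R1"
proof (cases "H = 0")
  case False
  define l where "l = min 1 (R1 / H)"
  have "H > 0" using False assms by simp
  then have "0 \<le> l" "l \<le> 1" "(1 - l) * H \<le> R0" "l * H \<le> R1"
    using assms by (auto simp: l_def min_def field_simps)
  then show ?thesis by (rule that)
qed (use assms in \<open>auto intro: that[of 0]\<close>)

lemma rate_polytope_subset_Union_Rstar:
  fixes Q :: "'x::finite \<times> 'x \<times> 'u::finite \<times> 'v::finite \<Rightarrow> real"
  assumes Q_nonneg: "\<And>z. Q z \<ge> 0" and Q_total: "sum Q UNIV = 1"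
  shows "rate_polytope Q \<subseteq> (\<Union>p\<in>Pstar Q. Rstar p)"
proof
  fix R assume "R \<in> rate_polytope Q"
  then obtain R0 R1 R2 where R: "R = (R0, R1, R2)" "0 \<le> R0" "0 \<le> R1" "0 \<le> R2"
    "cond_ent (side_pmf Q fst) \<le> R0 + R1" "cond_ent (side_pmf Q snd) \<le> R0 + R2"
    unfolding rate_polytope_def by auto
  obtain l1 where l1_choice: "0 \<le> l1" "l1 \<le> 1" "(1 - l1) * cond_ent (side_pmf Q fst) \<le> R0"
      "l1 * cond_ent (side_pmf Q fst) \<le> R1"
    using erasure_probability[OF R(2,3) _ R(5)] pair_pmf.cond_ent_nonneg[OF pair_pmf_side_pmf[OF assms]]
    by blast
  obtain l2 where l2_choice: "0 \<le> l2" "l2 \<le> 1" "(1 - l2) * cond_ent (side_pmf Q snd) \<le> R0"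
      "l2 * cond_ent (side_pmf Q snd) \<le> R2"
    using erasure_probability[OF R(2,4) _ R(6)] pair_pmf.cond_ent_nonneg[OF pair_pmf_side_pmf[OF assms]]
    by blast
  obtain enc :: "'x \<Rightarrow> nat" where enc: "bij_betw enc UNIV {1..CARD('x)}"
    using finite_same_card_bij[of "UNIV :: 'x set" "{1..CARD('x)}"] by auto
  then have "inj enc" "\<And>x. enc x \<in> {1..CARD('x)}"
    by (auto simp: bij_betw_def)
  then interpret erasure_setting Q enc l1 l2
    using Q_nonneg l1_choice(1,2) l2_choice(1,2) by unfold_locales auto
  have "R \<in> Rstar (erasure_aux Q enc l1 l2)"
    using l1_choice l2_choice unfolding R Rstar_eq
    by (simp add: cond_entropy_erasure_aux cond_mutual_info_erasure_aux)
  with erasure_aux_in_Pstar show "R \<in> (\<Union>p\<in>Pstar Q. Rstar p)"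
    by fast
qed

lemma block_prob_eq_sum:
  "block_prob Q n E = (\<Sum>zs\<in>blocks n. prod_list (map Q zs) * (if E zs then 1 else 0))"
  unfolding block_prob_def blocks_def by (intro sum.cong refl) auto

lemma block_prob_nonneg: "(\<And>z. Q z \<ge> 0) \<Longrightarrow> block_prob Q n E \<ge> 0"
  unfolding block_prob_eq_sum by (intro sum_nonneg) (simp add: prod_list_map_nonneg)

lemma block_prob_compl:
  assumes "sum Q UNIV = 1"
  shows "block_prob Q n E = 1 - block_prob Q n (\<lambda>zs. \<not> E zs)"
proof -
  have "block_prob Q n E + block_prob Q n (\<lambda>zs. \<not> E zs) = (\<Sum>zs\<in>blocks n. prod_list (map Q zs))"
    unfolding block_prob_eq_sum by (simp add: sum.distrib[symmetric] if_distrib cong: if_cong)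
      (intro sum.cong refl, auto)
  then show ?thesis using sum_blocks_pmf[of Q n] assms by simp
qed

lemma block_prob_mono:
  fixes Q :: "'z::finite \<Rightarrow> real"
  assumes "\<And>z. Q z \<ge> 0"
    and "\<And>zs. length zs = n \<Longrightarrow> \<forall>z\<in>set zs. Q z \<noteq> 0 \<Longrightarrow> E zs \<Longrightarrow> E' zs"
  shows "block_prob Q n E \<le> block_prob Q n E'"
  unfolding block_prob_eq_sum
proof (rule sum_mono)
  fix zs :: "'z list" assume zs: "zs \<in> blocks n"
  show "prod_list (map Q zs) * (if E zs then 1 else 0) \<le> prod_list (map Q zs) * (if E' zs then 1 else 0)"
  proof (cases "prod_list (map Q zs) = 0")
    case False
    then have "\<forall>z\<in>set zs. Q z \<noteq> 0" by (auto simp: prod_list_zero_iff)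
    then show ?thesis
      using assms(2)[of zs] zs prod_list_map_nonneg[of Q zs, OF assms(1)] by (auto simp: blocks_def)
  qed simp
qed

lemma Xs_eq: "Xs zs = map fst zs"
  and Us_eq: "Us zs = map (\<lambda>z. fst (snd (snd z))) zs"
  and Vs_eq: "Vs zs = map (\<lambda>z. snd (snd (snd z))) zs"
  by (simp_all add: Xs_def Us_def Vs_def split_beta)

lemma block_prob_side:
  fixes Q :: "'x::finite \<times> 'y::finite \<times> 'u::finite \<times> 'v::finite \<Rightarrow> real" and \<sigma> :: "'u \<times> 'v \<Rightarrow> 's::finite"
  shows "block_prob Q n (\<lambda>zs. G (Xs zs) (map (\<lambda>z. \<sigma> (snd (snd z))) zs)) =
    (\<Sum>ws\<in>blocks n. prod_list (map (side_pmf Q \<sigma>) ws) * (if G (map fst ws) (map snd ws) then 1 else 0))"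
  using sum_blocks_map[of Q "\<lambda>ws. if G (map fst ws) (map snd ws) then 1 else 0" "\<lambda>z. (fst z, \<sigma> (snd (snd z)))" n]
  by (simp add: block_prob_eq_sum Xs_eq side_pmf_def[abs_def] comp_def)

lemma Ys_eq_Xs:
  assumes "\<forall>x y u v. Q (x, y, u, v) \<noteq> 0 \<longrightarrow> x = y" "\<forall>z\<in>set zs. Q z \<noteq> 0"
  shows "Ys zs = Xs zs"
  unfolding Ys_def Xs_def
proof (rule map_cong[OF refl])
  fix z assume "z \<in> set zs"
  then have "Q z \<noteq> 0" using assms(2) by auto
  then show "(case z of (x, y, u, v) \<Rightarrow> y) = (case z of (x, y, u, v) \<Rightarrow> x)"
    using assms(1) by (cases z) auto
qed

lemma cond_ent_side_le_rate:
  fixes Q :: "'x::finite \<times> 'y::finite \<times> 'u::finite \<times> 'v::finite \<Rightarrow> real" and \<sigma> :: "'u \<times> 'v \<Rightarrow> 's::finite"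
  assumes "\<And>z. Q z \<ge> 0" "sum Q UNIV = 1"
    and codes: "\<And>\<epsilon>. \<epsilon> > 0 \<Longrightarrow> \<forall>\<^sub>F n in sequentially. \<exists>K D.
      (\<forall>ss. finite (D ss) \<and> real (card (D ss)) \<le> K) \<and> K \<le> 2 powr (real n * (R + \<epsilon>)) \<and>
      1 - \<epsilon> \<le> block_prob Q n (\<lambda>zs. Xs zs \<in> D (map (\<lambda>z. \<sigma> (snd (snd z))) zs))"
  shows "cond_ent (side_pmf Q \<sigma>) \<le> R"
  using codes by (intro pair_pmf.cond_ent_le_rate[OF pair_pmf_side_pmf[OF assms(1,2)]])
    (simp add: block_prob_side[where G = "\<lambda>xs ss. xs \<in> _ ss"])

lemma achievable_eventually:
  assumes "achievable Q (R0, R1, R2)" "\<epsilon> > 0"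
  shows "\<forall>\<^sub>F n in sequentially. n > 0 \<and> (\<exists>M0 M1 M2 e dx dy.
      M0 \<ge> 1 \<and> M1 \<ge> 1 \<and> M2 \<ge> 1 \<and> is_code n M0 M1 M2 e \<and>
      max (err_x Q n e dx) (err_y Q n e dy) \<le> \<epsilon> \<and>
      log 2 (real M0) / real n \<le> R0 + \<epsilon> \<and> log 2 (real M1) / real n \<le> R1 + \<epsilon> \<and>
      log 2 (real M2) / real n \<le> R2 + \<epsilon>)"
  using assms eventually_gt_at_top[of "0::nat"]
  unfolding achievable_def prod.case eventually_sequentially[symmetric] by (auto intro: eventually_conj)

lemma achievable_nonneg:
  assumes "achievable Q (R0, R1, R2)"
  shows "0 \<le> R0" "0 \<le> R1" "0 \<le> R2"
proof -
  have "- \<epsilon> \<le> R0 \<and> - \<epsilon> \<le> R1 \<and> - \<epsilon> \<le> R2" if \<epsilon>: "\<epsilon> > 0" for \<epsilon>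
  proof -
    obtain n M0 M1 M2 where "n > 0" "M0 \<ge> 1" "M1 \<ge> 1" "M2 \<ge> 1"
      "log 2 (real M0) / real n \<le> R0 + \<epsilon>" "log 2 (real M1) / real n \<le> R1 + \<epsilon>"
      "log 2 (real M2) / real n \<le> R2 + \<epsilon>"
      using eventually_happens'[OF sequentially_bot achievable_eventually[OF assms \<epsilon>]] by blast
    moreover have "log 2 (real M) / real n \<ge> 0" if "M \<ge> 1" for M :: nat
      using that by (intro divide_nonneg_nonneg) auto
    ultimately show ?thesis
      by (smt (verit))
  qed
  note eps = this
  show "0 \<le> R0" using eps[of "- R0 / 2"] by (cases "R0 < 0") auto
  show "0 \<le> R1" using eps[of "- R1 / 2"] by (cases "R1 < 0") auto
  show "0 \<le> R2" using eps[of "- R2 / 2"] by (cases "R2 < 0") auto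
qed

lemma messages_le_powr:
  assumes "M \<ge> (1::nat)" "n > 0" "log 2 (real M) / real n \<le> R"
  shows "real M \<le> 2 powr (real n * R)"
proof -
  have "log 2 (real M) \<le> real n * R"
    using assms by (simp add: divide_le_eq mult.commute)
  then have "2 powr (log 2 (real M)) \<le> 2 powr (real n * R)"
    by simp
  then show ?thesis
    using assms(1) by simp
qed

lemma card_decoder_image_le:
  "real (card ((\<lambda>(m0, m1). d m0 m1 ss) ` ({1..M0::nat} \<times> {1..M1::nat}))) \<le> real M0 * real M1"
  unfolding of_nat_mult[symmetric] of_nat_le_iff
  using card_image_le[of "{1..M0} \<times> {1..M1}" "\<lambda>(m0, m1). d m0 m1 ss"] by (simp add: card_cartesian_product)

lemma cond_ent_side_le_rates:
  fixes Q :: "'x::finite \<times> 'y::finite \<times> 'u::finite \<times> 'v::finite \<Rightarrow> real" and \<sigma> :: "'u \<times> 'v \<Rightarrow> 's::finite"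
  assumes Q: "\<And>z. Q z \<ge> 0" "sum Q UNIV = 1"
    and codes: "\<And>\<epsilon>. \<epsilon> > 0 \<Longrightarrow> \<forall>\<^sub>F n in sequentially. n > 0 \<and>
      (\<exists>M M' (d :: nat \<Rightarrow> nat \<Rightarrow> 's list \<Rightarrow> 'x list). M \<ge> 1 \<and> M' \<ge> 1 \<and>
        log 2 (real M) / real n \<le> A + \<epsilon> \<and> log 2 (real M') / real n \<le> B + \<epsilon> \<and>
        1 - \<epsilon> \<le> block_prob Q n (\<lambda>zs. Xs zs \<in> (\<lambda>(i, j). d i j (map (\<lambda>z. \<sigma> (snd (snd z))) zs)) ` ({1..M} \<times> {1..M'})))"
  shows "cond_ent (side_pmf Q \<sigma>) \<le> A + B"
proof (rule cond_ent_side_le_rate[OF Q])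
  fix \<epsilon> :: real assume "\<epsilon> > 0"
  show "\<forall>\<^sub>F n in sequentially. \<exists>K D. (\<forall>ss. finite (D ss) \<and> real (card (D ss)) \<le> K) \<and>
      K \<le> 2 powr (real n * (A + B + \<epsilon>)) \<and>
      1 - \<epsilon> \<le> block_prob Q n (\<lambda>zs. Xs zs \<in> D (map (\<lambda>z. \<sigma> (snd (snd z))) zs))"
    using codes[OF half_gt_zero[OF \<open>\<epsilon> > 0\<close>]]
  proof (rule eventually_mono, elim conjE exE)
    fix n M M' and d :: "nat \<Rightarrow> nat \<Rightarrow> 's list \<Rightarrow> 'x list"
    assume n: "n > 0" and M: "1 \<le> M" "1 \<le> M'"
      and rate: "log 2 (real M) / real n \<le> A + \<epsilon>/2" "log 2 (real M') / real n \<le> B + \<epsilon>/2"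
      and success: "1 - \<epsilon>/2 \<le> block_prob Q n
          (\<lambda>zs. Xs zs \<in> (\<lambda>(i, j). d i j (map (\<lambda>z. \<sigma> (snd (snd z))) zs)) ` ({1..M} \<times> {1..M'}))"
    define D where "D ss = (\<lambda>(i, j). d i j ss) ` ({1..M} \<times> {1..M'})" for ss
    have "real M * real M' \<le> 2 powr (real n * (A + \<epsilon>/2)) * 2 powr (real n * (B + \<epsilon>/2))"
      using messages_le_powr[OF M(1) n rate(1)] messages_le_powr[OF M(2) n rate(2)] by (simp add: mult_mono)
    also have "\<dots> = 2 powr (real n * (A + B + \<epsilon>))"
      by (simp add: powr_add[symmetric] algebra_simps)
    finally have "real M * real M' \<le> 2 powr (real n * (A + B + \<epsilon>))" .
    moreover have "finite (D ss)" "real (card (D ss)) \<le> real M * real M'" for ss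
      unfolding D_def by (simp, rule card_decoder_image_le)
    moreover have "1 - \<epsilon> \<le> block_prob Q n (\<lambda>zs. Xs zs \<in> D (map (\<lambda>z. \<sigma> (snd (snd z))) zs))"
      using success \<open>\<epsilon> > 0\<close> by (simp add: D_def)
    ultimately show "\<exists>K D. (\<forall>ss. finite (D ss) \<and> real (card (D ss)) \<le> K) \<and>
        K \<le> 2 powr (real n * (A + B + \<epsilon>)) \<and>
        1 - \<epsilon> \<le> block_prob Q n (\<lambda>zs. Xs zs \<in> D (map (\<lambda>z. \<sigma> (snd (snd z))) zs))"
      by blast
  qed
qed

lemma decoding_success_x:
  fixes Q :: "'x::finite \<times> 'x \<times> 'u::finite \<times> 'v::finite \<Rightarrow> real"
  assumes Q: "\<And>z. Q z \<ge> 0" "sum Q UNIV = 1" and code: "is_code n M0 M1 M2 e"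
  shows "1 - err_x Q n e dx \<le> block_prob Q n (\<lambda>zs. Xs zs \<in> (\<lambda>(i, j). dx i j (Us zs)) ` ({1..M0} \<times> {1..M1}))"
proof -
  have "block_prob Q n (\<lambda>zs. \<not> (case e (Xs zs, Ys zs) of (m0, m1, m2) \<Rightarrow> dx m0 m1 (Us zs) \<noteq> Xs zs))
      \<le> block_prob Q n (\<lambda>zs. Xs zs \<in> (\<lambda>(i, j). dx i j (Us zs)) ` ({1..M0} \<times> {1..M1}))"
  proof (rule block_prob_mono[OF Q(1)])
    fix zs :: "('x \<times> 'x \<times> 'u \<times> 'v) list"
    assume "length zs = n" and ok: "\<not> (case e (Xs zs, Ys zs) of (m0, m1, m2) \<Rightarrow> dx m0 m1 (Us zs) \<noteq> Xs zs)"
    then have "e (Xs zs, Ys zs) \<in> {1..M0} \<times> {1..M1} \<times> {1..M2}"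
      using code unfolding is_code_def by (simp add: Xs_def Ys_def)
    then show "Xs zs \<in> (\<lambda>(i, j). dx i j (Us zs)) ` ({1..M0} \<times> {1..M1})"
      using ok by (auto intro!: image_eqI[of _ _ "(fst (e (Xs zs, Ys zs)), fst (snd (e (Xs zs, Ys zs))))"])
  qed
  then show ?thesis
    unfolding err_x_def
    using block_prob_compl[OF Q(2), of n "\<lambda>zs. \<not> (case e (Xs zs, Ys zs) of (m0, m1, m2) \<Rightarrow> dx m0 m1 (Us zs) \<noteq> Xs zs)"]
    by simp
qed

lemma decoding_success_y:
  fixes Q :: "'x::finite \<times> 'x \<times> 'u::finite \<times> 'v::finite \<Rightarrow> real"
  assumes Q: "\<And>z. Q z \<ge> 0" "sum Q UNIV = 1" and code: "is_code n M0 M1 M2 e"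
    and support: "\<forall>x y u v. Q (x, y, u, v) \<noteq> 0 \<longrightarrow> x = y"
  shows "1 - err_y Q n e dy \<le> block_prob Q n (\<lambda>zs. Xs zs \<in> (\<lambda>(i, j). dy i j (Vs zs)) ` ({1..M0} \<times> {1..M2}))"
proof -
  have "block_prob Q n (\<lambda>zs. \<not> (case e (Xs zs, Ys zs) of (m0, m1, m2) \<Rightarrow> dy m0 m2 (Vs zs) \<noteq> Ys zs))
      \<le> block_prob Q n (\<lambda>zs. Xs zs \<in> (\<lambda>(i, j). dy i j (Vs zs)) ` ({1..M0} \<times> {1..M2}))"
  proof (rule block_prob_mono[OF Q(1)])
    fix zs :: "('x \<times> 'x \<times> 'u \<times> 'v) list"
    assume "length zs = n" and ok: "\<not> (case e (Xs zs, Ys zs) of (m0, m1, m2) \<Rightarrow> dy m0 m2 (Vs zs) \<noteq> Ys zs)"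
      and "\<forall>z\<in>set zs. Q z \<noteq> 0"
    then have "Ys zs = Xs zs" "e (Xs zs, Ys zs) \<in> {1..M0} \<times> {1..M1} \<times> {1..M2}"
      using code Ys_eq_Xs[OF support] unfolding is_code_def by (simp_all add: Xs_def Ys_def)
    then show "Xs zs \<in> (\<lambda>(i, j). dy i j (Vs zs)) ` ({1..M0} \<times> {1..M2})"
      using ok by (auto intro!: image_eqI[of _ _ "(fst (e (Xs zs, Ys zs)), snd (snd (e (Xs zs, Ys zs))))"])
  qed
  then show ?thesis
    unfolding err_y_def
    using block_prob_compl[OF Q(2), of n "\<lambda>zs. \<not> (case e (Xs zs, Ys zs) of (m0, m1, m2) \<Rightarrow> dy m0 m2 (Vs zs) \<noteq> Ys zs)"]
    by simp
qed

lemma achievable_imp_rate_x: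
  fixes Q :: "'x::finite \<times> 'x \<times> 'u::finite \<times> 'v::finite \<Rightarrow> real"
  assumes Q: "\<And>z. Q z \<ge> 0" "sum Q UNIV = 1" and "achievable Q (R0, R1, R2)"
  shows "cond_ent (side_pmf Q fst) \<le> R0 + R1"
proof (rule cond_ent_side_le_rates[OF Q])
  fix \<epsilon> :: real assume "\<epsilon> > 0"
  from achievable_eventually[OF assms(3) this] show "\<forall>\<^sub>F n in sequentially. n > 0 \<and>
      (\<exists>M M' (d :: nat \<Rightarrow> nat \<Rightarrow> 'u list \<Rightarrow> 'x list). M \<ge> 1 \<and> M' \<ge> 1 \<and>
        log 2 (real M) / real n \<le> R0 + \<epsilon> \<and> log 2 (real M') / real n \<le> R1 + \<epsilon> \<and>
        1 - \<epsilon> \<le> block_prob Q n (\<lambda>zs. Xs zs \<in> (\<lambda>(i, j). d i j (map (\<lambda>z. fst (snd (snd z))) zs)) ` ({1..M} \<times> {1..M'})))"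
  proof (rule eventually_mono, elim conjE exE)
    fix n M0 M1 M2 e dx dy
    assume "n > 0" "1 \<le> M0" "1 \<le> M1" "1 \<le> M2" and code: "is_code n M0 M1 M2 e"
      and err: "max (err_x Q n e dx) (err_y Q n e dy) \<le> \<epsilon>"
      and "log 2 (real M0) / real n \<le> R0 + \<epsilon>" "log 2 (real M1) / real n \<le> R1 + \<epsilon>"
    moreover have "1 - \<epsilon> \<le> block_prob Q n (\<lambda>zs. Xs zs \<in> (\<lambda>(i, j). dx i j (Us zs)) ` ({1..M0} \<times> {1..M1}))"
      using decoding_success_x[OF Q code, of dx] err by simp
    ultimately show "n > 0 \<and> (\<exists>M M' (d :: nat \<Rightarrow> nat \<Rightarrow> 'u list \<Rightarrow> 'x list). M \<ge> 1 \<and> M' \<ge> 1 \<and>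
        log 2 (real M) / real n \<le> R0 + \<epsilon> \<and> log 2 (real M') / real n \<le> R1 + \<epsilon> \<and>
        1 - \<epsilon> \<le> block_prob Q n (\<lambda>zs. Xs zs \<in> (\<lambda>(i, j). d i j (map (\<lambda>z. fst (snd (snd z))) zs)) ` ({1..M} \<times> {1..M'})))"
      unfolding Us_eq[symmetric] by blast
  qed
qed

lemma achievable_imp_rate_y:
  fixes Q :: "'x::finite \<times> 'x \<times> 'u::finite \<times> 'v::finite \<Rightarrow> real"
  assumes Q: "\<And>z. Q z \<ge> 0" "sum Q UNIV = 1" and "achievable Q (R0, R1, R2)"
    and support: "\<forall>x y u v. Q (x, y, u, v) \<noteq> 0 \<longrightarrow> x = y"
  shows "cond_ent (side_pmf Q snd) \<le> R0 + R2"
proof (rule cond_ent_side_le_rates[OF Q])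
  fix \<epsilon> :: real assume "\<epsilon> > 0"
  from achievable_eventually[OF assms(3) this] show "\<forall>\<^sub>F n in sequentially. n > 0 \<and>
      (\<exists>M M' (d :: nat \<Rightarrow> nat \<Rightarrow> 'v list \<Rightarrow> 'x list). M \<ge> 1 \<and> M' \<ge> 1 \<and>
        log 2 (real M) / real n \<le> R0 + \<epsilon> \<and> log 2 (real M') / real n \<le> R2 + \<epsilon> \<and>
        1 - \<epsilon> \<le> block_prob Q n (\<lambda>zs. Xs zs \<in> (\<lambda>(i, j). d i j (map (\<lambda>z. snd (snd (snd z))) zs)) ` ({1..M} \<times> {1..M'})))"
  proof (rule eventually_mono, elim conjE exE)
    fix n M0 M1 M2 e dx dy
    assume "n > 0" "1 \<le> M0" "1 \<le> M1" "1 \<le> M2" and code: "is_code n M0 M1 M2 e"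
      and err: "max (err_x Q n e dx) (err_y Q n e dy) \<le> \<epsilon>"
      and "log 2 (real M0) / real n \<le> R0 + \<epsilon>" "log 2 (real M2) / real n \<le> R2 + \<epsilon>"
    moreover have "1 - \<epsilon> \<le> block_prob Q n (\<lambda>zs. Xs zs \<in> (\<lambda>(i, j). dy i j (Vs zs)) ` ({1..M0} \<times> {1..M2}))"
      using decoding_success_y[OF Q code support, of dy] err by simp
    ultimately show "n > 0 \<and> (\<exists>M M' (d :: nat \<Rightarrow> nat \<Rightarrow> 'v list \<Rightarrow> 'x list). M \<ge> 1 \<and> M' \<ge> 1 \<and>
        log 2 (real M) / real n \<le> R0 + \<epsilon> \<and> log 2 (real M') / real n \<le> R2 + \<epsilon> \<and>
        1 - \<epsilon> \<le> block_prob Q n (\<lambda>zs. Xs zs \<in> (\<lambda>(i, j). d i j (map (\<lambda>z. snd (snd (snd z))) zs)) ` ({1..M} \<times> {1..M'})))"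
      unfolding Vs_eq[symmetric] by blast
  qed
qed

lemma message_size:
  assumes "0 \<le> R" "\<epsilon> > 0" "n > 0"
  defines "M \<equiv> nat \<lfloor>2 powr (real n * (R + \<epsilon>/2))\<rfloor>"
  shows "M \<ge> 1" "log 2 (real M) / real n \<le> R + \<epsilon>" "2 powr (real n * (R + \<epsilon>/2)) \<le> 2 * real M"
proof -
  define y where "y = 2 powr (real n * (R + \<epsilon>/2))"
  have y: "y \<ge> 1" unfolding y_def using assms by (auto intro!: ge_one_powr_ge_zero)
  then have floor: "1 \<le> \<lfloor>y\<rfloor>" by simp
  then have M: "real M = of_int \<lfloor>y\<rfloor>"
    unfolding M_def y_def[symmetric] by simp
  with floor show "M \<ge> 1" by linarith
  show "y \<le> 2 * real M" using M floor by linarith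
  have "log 2 (real M) \<le> log 2 y"
    using M \<open>M \<ge> 1\<close> by (subst log_le_cancel_iff) linarith+
  also have "\<dots> = real n * (R + \<epsilon>/2)" by (simp add: y_def)
  finally have "log 2 (real M) / real n \<le> R + \<epsilon>/2"
    using assms by (simp add: divide_le_eq mult.commute)
  then show "log 2 (real M) / real n \<le> R + \<epsilon>"
    using assms by linarith
qed

lemma card_fibre_messages:
  fixes M0 M1 M2 :: nat
  defines "B \<equiv> {1..M0} \<times> {1..M1} \<times> {1..M2}"
  assumes "y0 \<in> B"
  shows "real (card {y\<in>B. (\<lambda>(m0, m1, m2). (m0, m1)) y = (\<lambda>(m0, m1, m2). (m0, m1)) y0})
      * (real M0 * real M1) = real (card B)"
    and "real (card {y\<in>B. (\<lambda>(m0, m1, m2). (m0, m2)) y = (\<lambda>(m0, m1, m2). (m0, m2)) y0})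
      * (real M0 * real M2) = real (card B)"
proof -
  obtain a b c where y0: "y0 = (a, b, c)" by (cases y0)
  have "{y\<in>B. (\<lambda>(m0, m1, m2). (m0, m1)) y = (\<lambda>(m0, m1, m2). (m0, m1)) y0} = (\<lambda>c. (a, b, c)) ` {1..M2}"
    "{y\<in>B. (\<lambda>(m0, m1, m2). (m0, m2)) y = (\<lambda>(m0, m1, m2). (m0, m2)) y0} = (\<lambda>b. (a, b, c)) ` {1..M1}"
    using assms y0 by auto
  then show "real (card {y\<in>B. (\<lambda>(m0, m1, m2). (m0, m1)) y = (\<lambda>(m0, m1, m2). (m0, m1)) y0})
      * (real M0 * real M1) = real (card B)"
    and "real (card {y\<in>B. (\<lambda>(m0, m1, m2). (m0, m2)) y = (\<lambda>(m0, m1, m2). (m0, m2)) y0})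
      * (real M0 * real M2) = real (card B)"
    by (simp_all add: card_image inj_on_def B_def card_cartesian_product)
qed

lemma block_prob_cong:
  assumes "\<And>z. Q z \<ge> 0" "\<And>zs. length zs = n \<Longrightarrow> \<forall>z\<in>set zs. Q z \<noteq> 0 \<Longrightarrow> E zs = E' zs"
  shows "block_prob Q n E = block_prob Q n E'"
  using block_prob_mono[of Q n E E'] block_prob_mono[of Q n E' E] assms by (auto intro: antisym)

definition side_decoder ::
  "('x::finite \<times> 'y::finite \<times> 'u::finite \<times> 'v::finite \<Rightarrow> real) \<Rightarrow> ('u \<times> 'v \<Rightarrow> 's::finite) \<Rightarrow> real \<Rightarrow> nat \<Rightarrow>
    ('x list \<Rightarrow> 'm) \<Rightarrow> ('m \<Rightarrow> 'k) \<Rightarrow> 'k \<Rightarrow> 's list \<Rightarrow> 'x list"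
where
  "side_decoder Q \<sigma> \<delta> n =
     bin_decoder (side_pmf Q \<sigma>) (2 powr (- (real n * (cond_ent (side_pmf Q \<sigma>) + \<delta>)))) n"

lemma avg_side_decoder_error_le:
  fixes Q :: "'x::finite \<times> 'y::finite \<times> 'u::finite \<times> 'v::finite \<Rightarrow> real" and \<sigma> :: "'u \<times> 'v \<Rightarrow> 's::finite"
    and \<beta> :: "'m \<Rightarrow> 'k"
  assumes Q: "\<And>z. Q z \<ge> 0" "sum Q UNIV = 1" and "\<delta> > 0" "n > 0" "finite B" "K > 0"
    and "\<And>y0. y0 \<in> B \<Longrightarrow> real (card {y\<in>B. \<beta> y = \<beta> y0}) * K = real (card B)"
  shows "(\<Sum>f\<in>PiE (blocks n) (\<lambda>_. B).
      block_prob Q n (\<lambda>zs. side_decoder Q \<sigma> \<delta> n f \<beta> (\<beta> (f (Xs zs))) (map (\<lambda>z. \<sigma> (snd (snd z))) zs) \<noteq> Xs zs))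
    \<le> real (card (PiE (blocks n :: 'x list set) (\<lambda>_. B))) *
      (pair_pmf.info_var (side_pmf Q \<sigma>) / (real n * \<delta>\<^sup>2) + 2 powr (real n * (cond_ent (side_pmf Q \<sigma>) + \<delta>)) / K)"
proof -
  have "block_prob Q n (\<lambda>zs. side_decoder Q \<sigma> \<delta> n f \<beta> (\<beta> (f (Xs zs))) (map (\<lambda>z. \<sigma> (snd (snd z))) zs) \<noteq> Xs zs)
      = (\<Sum>ws\<in>blocks n. prod_list (map (side_pmf Q \<sigma>) ws) *
          (if side_decoder Q \<sigma> \<delta> n f \<beta> (\<beta> (f (map fst ws))) (map snd ws) \<noteq> map fst ws then 1 else 0))" for f
    by (rule block_prob_side)
  then show ?thesis
    using pair_pmf.avg_bin_decoder_error_le[OF pair_pmf_side_pmf[OF Q] assms(3-7)]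
    by (simp add: side_decoder_def)
qed

lemma binning_error_term_le:
  fixes H R0 R1 \<epsilon> :: real and n M0 M1 :: nat
  assumes "H \<le> R0 + R1" "\<epsilon> > 0"
    and "2 powr (real n * (R0 + \<epsilon>/2)) \<le> 2 * real M0" "2 powr (real n * (R1 + \<epsilon>/2)) \<le> 2 * real M1"
  shows "2 powr (real n * (H + \<epsilon>/4)) / (real M0 * real M1) \<le> 4 * 2 powr (- (3 * \<epsilon> / 4 * real n))"
proof -
  have "2 powr (real n * (R0 + R1 + \<epsilon>)) \<le> 4 * (real M0 * real M1)"
    using mult_mono[OF assms(3,4)] by (simp add: powr_add[symmetric] algebra_simps)
  moreover have "0 < 2 powr (real n * (R0 + R1 + \<epsilon>))" by simp
  moreover have "real M0 > 0" "real M1 > 0"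
    using assms(3,4) powr_gt_zero[of 2 "real n * (R0 + \<epsilon>/2)"] powr_gt_zero[of 2 "real n * (R1 + \<epsilon>/2)"]
    by linarith+
  ultimately have "2 powr (real n * (H + \<epsilon>/4)) / (real M0 * real M1)
      \<le> 2 powr (real n * (H + \<epsilon>/4)) / (2 powr (real n * (R0 + R1 + \<epsilon>)) / 4)"
    by (intro divide_left_mono) auto
  also have "\<dots> = 4 * 2 powr (real n * (H + \<epsilon>/4) - real n * (R0 + R1 + \<epsilon>))"
    by (simp add: powr_diff)
  also have "\<dots> \<le> 4 * 2 powr (- (3 * \<epsilon> / 4 * real n))"
  proof -
    have "real n * H \<le> real n * (R0 + R1)"
      using assms(1) by (intro mult_left_mono) auto
    then show ?thesis by (simp add: algebra_simps)
  qed
  finally show ?thesis .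
qed
lemma avg_err_x_binning_le:
  fixes Q :: "'x::finite \<times> 'x \<times> 'u::finite \<times> 'v::finite \<Rightarrow> real" and M0 M1 M2 :: nat
  assumes Q: "\<And>z. Q z \<ge> 0" "sum Q UNIV = 1" and "\<epsilon> > 0" "n > 0" "M0 \<ge> 1" "M1 \<ge> 1"
    and M: "2 powr (real n * (R0 + \<epsilon>/2)) \<le> 2 * real M0" "2 powr (real n * (R1 + \<epsilon>/2)) \<le> 2 * real M1"
    and H: "cond_ent (side_pmf Q fst) \<le> R0 + R1"
  defines "FS \<equiv> PiE (blocks n :: 'x list set) (\<lambda>_. {1..M0} \<times> {1..M1} \<times> {1..M2})"
  shows "(\<Sum>f\<in>FS. err_x Q n (\<lambda>(xs, ys). f xs)
            (\<lambda>m0 m1. side_decoder Q fst (\<epsilon>/4) n f (\<lambda>(m0, m1, m2). (m0, m1)) (m0, m1)))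
    \<le> real (card FS) * (pair_pmf.info_var (side_pmf Q fst) / (real n * (\<epsilon>/4)\<^sup>2) + 4 * 2 powr (- (3 * \<epsilon> / 4 * real n)))"
proof -
  have "err_x Q n (\<lambda>(xs, ys). f xs) (\<lambda>m0 m1. side_decoder Q fst (\<epsilon>/4) n f (\<lambda>(m0, m1, m2). (m0, m1)) (m0, m1)) =
      block_prob Q n (\<lambda>zs. side_decoder Q fst (\<epsilon>/4) n f (\<lambda>(m0, m1, m2). (m0, m1))
        ((\<lambda>(m0, m1, m2). (m0, m1)) (f (Xs zs))) (map (\<lambda>z. fst (snd (snd z))) zs) \<noteq> Xs zs)" for f
    unfolding err_x_def Us_eq by (simp add: split_beta)
  then have "(\<Sum>f\<in>FS. err_x Q n (\<lambda>(xs, ys). f xs)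
            (\<lambda>m0 m1. side_decoder Q fst (\<epsilon>/4) n f (\<lambda>(m0, m1, m2). (m0, m1)) (m0, m1)))
      = (\<Sum>f\<in>FS. block_prob Q n (\<lambda>zs. side_decoder Q fst (\<epsilon>/4) n f (\<lambda>(m0, m1, m2). (m0, m1))
        ((\<lambda>(m0, m1, m2). (m0, m1)) (f (Xs zs))) (map (\<lambda>z. fst (snd (snd z))) zs) \<noteq> Xs zs))"
    by simp
  also have "\<dots> \<le> real (card FS) * (pair_pmf.info_var (side_pmf Q fst) / (real n * (\<epsilon>/4)\<^sup>2)
          + 2 powr (real n * (cond_ent (side_pmf Q fst) + \<epsilon>/4)) / (real M0 * real M1))"
    unfolding FS_def
    by (rule avg_side_decoder_error_le[OF Q _ \<open>n > 0\<close> _ _ card_fibre_messages(1)]) (use assms(3-6) in auto)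
  also have "\<dots> \<le> real (card FS) * (pair_pmf.info_var (side_pmf Q fst) / (real n * (\<epsilon>/4)\<^sup>2)
      + 4 * 2 powr (- (3 * \<epsilon> / 4 * real n)))"
    using binning_error_term_le[OF H \<open>\<epsilon> > 0\<close> M] by (intro mult_left_mono add_left_mono) auto
  finally show ?thesis .
qed

lemma avg_err_y_binning_le:
  fixes Q :: "'x::finite \<times> 'x \<times> 'u::finite \<times> 'v::finite \<Rightarrow> real" and M0 M1 M2 :: nat
  assumes Q: "\<And>z. Q z \<ge> 0" "sum Q UNIV = 1" and "\<epsilon> > 0" "n > 0" "M0 \<ge> 1" "M2 \<ge> 1"
    and M: "2 powr (real n * (R0 + \<epsilon>/2)) \<le> 2 * real M0" "2 powr (real n * (R2 + \<epsilon>/2)) \<le> 2 * real M2"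
    and H: "cond_ent (side_pmf Q snd) \<le> R0 + R2"
    and support: "\<forall>x y u v. Q (x, y, u, v) \<noteq> 0 \<longrightarrow> x = y"
  defines "FS \<equiv> PiE (blocks n :: 'x list set) (\<lambda>_. {1..M0} \<times> {1..M1} \<times> {1..M2})"
  shows "(\<Sum>f\<in>FS. err_y Q n (\<lambda>(xs, ys). f xs)
            (\<lambda>m0 m2. side_decoder Q snd (\<epsilon>/4) n f (\<lambda>(m0, m1, m2). (m0, m2)) (m0, m2)))
    \<le> real (card FS) * (pair_pmf.info_var (side_pmf Q snd) / (real n * (\<epsilon>/4)\<^sup>2) + 4 * 2 powr (- (3 * \<epsilon> / 4 * real n)))"
proof -
  have "err_y Q n (\<lambda>(xs, ys). f xs) (\<lambda>m0 m2. side_decoder Q snd (\<epsilon>/4) n f (\<lambda>(m0, m1, m2). (m0, m2)) (m0, m2)) =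
      block_prob Q n (\<lambda>zs. side_decoder Q snd (\<epsilon>/4) n f (\<lambda>(m0, m1, m2). (m0, m2))
        ((\<lambda>(m0, m1, m2). (m0, m2)) (f (Xs zs))) (map (\<lambda>z. snd (snd (snd z))) zs) \<noteq> Xs zs)" for f
    unfolding err_y_def Vs_eq
    by (rule block_prob_cong[OF Q(1)]) (simp add: Ys_eq_Xs[OF support] split_beta)
  then have "(\<Sum>f\<in>FS. err_y Q n (\<lambda>(xs, ys). f xs)
            (\<lambda>m0 m2. side_decoder Q snd (\<epsilon>/4) n f (\<lambda>(m0, m1, m2). (m0, m2)) (m0, m2)))
      = (\<Sum>f\<in>FS. block_prob Q n (\<lambda>zs. side_decoder Q snd (\<epsilon>/4) n f (\<lambda>(m0, m1, m2). (m0, m2))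
        ((\<lambda>(m0, m1, m2). (m0, m2)) (f (Xs zs))) (map (\<lambda>z. snd (snd (snd z))) zs) \<noteq> Xs zs))"
    by simp
  also have "\<dots> \<le> real (card FS) * (pair_pmf.info_var (side_pmf Q snd) / (real n * (\<epsilon>/4)\<^sup>2)
          + 2 powr (real n * (cond_ent (side_pmf Q snd) + \<epsilon>/4)) / (real M0 * real M2))"
    unfolding FS_def
    by (rule avg_side_decoder_error_le[OF Q _ \<open>n > 0\<close> _ _ card_fibre_messages(2)]) (use assms(3-6) in auto)
  also have "\<dots> \<le> real (card FS) * (pair_pmf.info_var (side_pmf Q snd) / (real n * (\<epsilon>/4)\<^sup>2)
      + 4 * 2 powr (- (3 * \<epsilon> / 4 * real n)))"
    using binning_error_term_le[OF H \<open>\<epsilon> > 0\<close> M] by (intro mult_left_mono add_left_mono) auto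
  finally show ?thesis .
qed

lemma exists_le_average:
  fixes g :: "'a \<Rightarrow> real"
  assumes "finite F" "F \<noteq> {}" "sum g F \<le> real (card F) * c"
  obtains f where "f \<in> F" "g f \<le> c"
proof (rule ccontr)
  assume "\<not> thesis"
  with that have "(\<Sum>f\<in>F. c) < sum g F"
    using assms(1,2) by (intro sum_strict_mono) force+
  with assms(3) show False by simp
qed

lemma binning_code_exists:
  fixes Q :: "'x::finite \<times> 'x \<times> 'u::finite \<times> 'v::finite \<Rightarrow> real"
  assumes Q: "\<And>z. Q z \<ge> 0" "sum Q UNIV = 1" and support: "\<forall>x y u v. Q (x, y, u, v) \<noteq> 0 \<longrightarrow> x = y"
    and R: "(R0, R1, R2) \<in> rate_polytope Q" and "\<epsilon> > 0" "n > 0"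
    and small: "pair_pmf.info_var (side_pmf Q fst) / (real n * (\<epsilon>/4)\<^sup>2) + 4 * 2 powr (- (3 * \<epsilon> / 4 * real n)) \<le> \<epsilon>/2"
      "pair_pmf.info_var (side_pmf Q snd) / (real n * (\<epsilon>/4)\<^sup>2) + 4 * 2 powr (- (3 * \<epsilon> / 4 * real n)) \<le> \<epsilon>/2"
  shows "\<exists>M0 M1 M2 e (dx :: nat \<Rightarrow> nat \<Rightarrow> 'u list \<Rightarrow> 'x list) (dy :: nat \<Rightarrow> nat \<Rightarrow> 'v list \<Rightarrow> 'x list).
      M0 \<ge> 1 \<and> M1 \<ge> 1 \<and> M2 \<ge> 1 \<and> is_code n M0 M1 M2 e \<and> max (err_x Q n e dx) (err_y Q n e dy) \<le> \<epsilon> \<and>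
      log 2 (real M0) / real n \<le> R0 + \<epsilon> \<and> log 2 (real M1) / real n \<le> R1 + \<epsilon> \<and>
      log 2 (real M2) / real n \<le> R2 + \<epsilon>"
proof -
  have Rc: "0 \<le> R0" "0 \<le> R1" "0 \<le> R2"
    "cond_ent (side_pmf Q fst) \<le> R0 + R1" "cond_ent (side_pmf Q snd) \<le> R0 + R2"
    using R by (auto simp: rate_polytope_def)
  define M0 where "M0 = nat \<lfloor>2 powr (real n * (R0 + \<epsilon>/2))\<rfloor>"
  define M1 where "M1 = nat \<lfloor>2 powr (real n * (R1 + \<epsilon>/2))\<rfloor>"
  define M2 where "M2 = nat \<lfloor>2 powr (real n * (R2 + \<epsilon>/2))\<rfloor>"
  note M0 = message_size[OF Rc(1) \<open>\<epsilon> > 0\<close> \<open>n > 0\<close>, folded M0_def]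
  note M1 = message_size[OF Rc(2) \<open>\<epsilon> > 0\<close> \<open>n > 0\<close>, folded M1_def]
  note M2 = message_size[OF Rc(3) \<open>\<epsilon> > 0\<close> \<open>n > 0\<close>, folded M2_def]
  define FS where "FS = PiE (blocks n :: 'x list set) (\<lambda>_. {1..M0} \<times> {1..M1} \<times> {1..M2})"
  define dx where "dx f = (\<lambda>m0 m1. side_decoder Q fst (\<epsilon>/4) n f (\<lambda>(m0, m1, m2). (m0, m1)) (m0, m1))"
    for f :: "'x list \<Rightarrow> nat \<times> nat \<times> nat"
  define dy where "dy f = (\<lambda>m0 m2. side_decoder Q snd (\<epsilon>/4) n f (\<lambda>(m0, m1, m2). (m0, m2)) (m0, m2))"
    for f :: "'x list \<Rightarrow> nat \<times> nat \<times> nat"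
  have "(\<Sum>f\<in>FS. err_x Q n (\<lambda>(xs, ys). f xs) (dx f)) \<le> real (card FS) * (\<epsilon>/2)"
    unfolding FS_def dx_def
    by (rule order.trans[OF avg_err_x_binning_le[OF Q \<open>\<epsilon> > 0\<close> \<open>n > 0\<close> M0(1) M1(1) M0(3) M1(3) Rc(4)]
          mult_left_mono[OF small(1)]]) simp
  moreover have "(\<Sum>f\<in>FS. err_y Q n (\<lambda>(xs, ys). f xs) (dy f)) \<le> real (card FS) * (\<epsilon>/2)"
    unfolding FS_def dy_def
    by (rule order.trans[OF avg_err_y_binning_le[OF Q \<open>\<epsilon> > 0\<close> \<open>n > 0\<close> M0(1) M2(1) M0(3) M2(3) Rc(5) support]
          mult_left_mono[OF small(2)]]) simp
  ultimately have avg: "(\<Sum>f\<in>FS. err_x Q n (\<lambda>(xs, ys). f xs) (dx f) + err_y Q n (\<lambda>(xs, ys). f xs) (dy f))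
      \<le> real (card FS) * \<epsilon>"
    unfolding sum.distrib by (simp add: field_simps)
  have "finite FS" "FS \<noteq> {}"
    using M0(1) M1(1) M2(1) by (auto simp: FS_def finite_PiE PiE_eq_empty_iff)
  then obtain f where f: "f \<in> FS" "err_x Q n (\<lambda>(xs, ys). f xs) (dx f) + err_y Q n (\<lambda>(xs, ys). f xs) (dy f) \<le> \<epsilon>"
    using avg by (rule exists_le_average)
  moreover have "err_x Q n (\<lambda>(xs, ys). f xs) (dx f) \<ge> 0" "err_y Q n (\<lambda>(xs, ys). f xs) (dy f) \<ge> 0"
    unfolding err_x_def err_y_def using block_prob_nonneg[OF Q(1)] by auto
  moreover have "is_code n M0 M1 M2 (\<lambda>(xs, ys). f xs)"
    using f(1) by (auto simp: is_code_def FS_def blocks_def PiE_def Pi_def)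
  ultimately show ?thesis
    using M0 M1 M2 by (intro exI[of _ M0] exI[of _ M1] exI[of _ M2] exI[of _ "\<lambda>(xs, ys). f xs"]
        exI[of _ "dx f"] exI[of _ "dy f"]) auto
qed

lemma rate_polytope_achievable:
  fixes Q :: "'x::finite \<times> 'x \<times> 'u::finite \<times> 'v::finite \<Rightarrow> real"
  assumes Q: "\<And>z. Q z \<ge> 0" "sum Q UNIV = 1" and support: "\<forall>x y u v. Q (x, y, u, v) \<noteq> 0 \<longrightarrow> x = y"
    and R: "(R0, R1, R2) \<in> rate_polytope Q"
  shows "achievable Q (R0, R1, R2)"
  unfolding achievable_def prod.case eventually_sequentially[symmetric]
proof (intro allI impI)
  fix \<epsilon> :: real assume "\<epsilon> > 0"
  define Vu where "Vu = pair_pmf.info_var (side_pmf Q fst) / (\<epsilon>/4)\<^sup>2"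
  define Vv where "Vv = pair_pmf.info_var (side_pmf Q snd) / (\<epsilon>/4)\<^sup>2"
  have "((\<lambda>n. V / real n + 4 * 2 powr (- (3 * \<epsilon> / 4 * real n))) \<longlongrightarrow> 0) sequentially" for V
    using \<open>\<epsilon> > 0\<close> by real_asymp
  then have "\<forall>\<^sub>F n in sequentially. V / real n + 4 * 2 powr (- (3 * \<epsilon> / 4 * real n)) < \<epsilon>/2" for V
    using \<open>\<epsilon> > 0\<close> by (intro order_tendstoD(2)) auto
  then have "\<forall>\<^sub>F n in sequentially. n > 0 \<and>
      Vu / real n + 4 * 2 powr (- (3 * \<epsilon> / 4 * real n)) < \<epsilon>/2 \<and>
      Vv / real n + 4 * 2 powr (- (3 * \<epsilon> / 4 * real n)) < \<epsilon>/2"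
    by (intro eventually_conj eventually_gt_at_top)
  then show "\<forall>\<^sub>F n in sequentially. \<exists>M0 M1 M2 e (dx :: nat \<Rightarrow> nat \<Rightarrow> 'u list \<Rightarrow> 'x list)
      (dy :: nat \<Rightarrow> nat \<Rightarrow> 'v list \<Rightarrow> 'x list).
      M0 \<ge> 1 \<and> M1 \<ge> 1 \<and> M2 \<ge> 1 \<and> is_code n M0 M1 M2 e \<and> max (err_x Q n e dx) (err_y Q n e dy) \<le> \<epsilon> \<and>
      log 2 (real M0) / real n \<le> R0 + \<epsilon> \<and> log 2 (real M1) / real n \<le> R1 + \<epsilon> \<and>
      log 2 (real M2) / real n \<le> R2 + \<epsilon>"
    by (rule eventually_mono, intro binning_code_exists[OF Q support R \<open>\<epsilon> > 0\<close>])
      (auto simp: Vu_def Vv_def field_simps)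
qed

lemma rate_region_eq_rate_polytope:
  fixes Q :: "'x::finite \<times> 'x \<times> 'u::finite \<times> 'v::finite \<Rightarrow> real"
  assumes Q: "\<And>z. Q z \<ge> 0" "sum Q UNIV = 1" and support: "\<forall>x y u v. Q (x, y, u, v) \<noteq> 0 \<longrightarrow> x = y"
  shows "rate_region Q = rate_polytope Q"
proof (rule set_eqI)
  fix R :: "real \<times> real \<times> real"
  obtain R0 R1 R2 where R: "R = (R0, R1, R2)" by (cases R)
  have "achievable Q (R0, R1, R2) \<longleftrightarrow> (R0, R1, R2) \<in> rate_polytope Q"
    using achievable_nonneg[of Q R0 R1 R2] achievable_imp_rate_x[OF Q, of R0 R1 R2]
      achievable_imp_rate_y[OF Q _ support, of R0 R1 R2] rate_polytope_achievable[OF Q support, of R0 R1 R2]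
    unfolding rate_polytope_def by blast
  then show "R \<in> rate_region Q \<longleftrightarrow> R \<in> rate_polytope Q"
    by (simp add: R rate_region_def)
qed

theorem theorem4:
  fixes Q :: "'x::finite \<times> 'x \<times> 'u::finite \<times> 'v::finite \<Rightarrow> real"
  assumes "\<forall>z. Q z \<ge> 0"
    and "(\<Sum>z\<in>UNIV. Q z) = 1"
    and "\<forall>x y u v. Q (x, y, u, v) \<noteq> 0 \<longrightarrow> x = y"
  shows "rate_region Q = closure (\<Union>p\<in>Pstar Q. Rstar p)"
proof -
  have Q: "\<And>z. Q z \<ge> 0" "sum Q UNIV = 1"
    using assms(1,2) by auto
  have "(\<Union>p\<in>Pstar Q. Rstar p) = rate_polytope Q"
    using Rstar_subset_rate_polytope rate_polytope_subset_Union_Rstar[OF Q] by blast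
  then show ?thesis
    using rate_region_eq_rate_polytope[OF Q assms(3)] closed_rate_polytope closure_closed by metis
qed

end
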